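(* Assume $X$ and $c\theta$ ($c>0$) are independent, non-negative, integer-valued random variables with $\mathbb{P}(c\theta\le m)=1$ for some $m\in\mathbb{N}$, and that the net profit condition $c\,\mathbb{E}\theta-\mathbb{E}X>0$ holds (with finite means). Then: (1) for all $s\in\mathbb{C}$ with $0<|s|\le 1$, $$\sum_{i=0}^{m-1}\pi_i\sum_{j=i+1}^{m}(1-s^{i-j})f(-j)=G_{\mathcal M}(s)\big(1-G_{X-c\theta}(s)\big);$$ (2) $$\sum_{i=0}^{m-1}\pi_i\sum_{j=i+1}^{m}(j-i)f(-j)=c\,\mathbb{E}\theta-\mathbb{E}X;$$ (3) for all $|s|<1$ with $s^m(1-G_{X-c\theta}(s))\neq 0$, $$\Xi(s)=\frac{1}{s^m\big(G_{X-c\theta}(s)-1\big)}\sum_{i=0}^{m-1}\pi_i\sum_{j=0}^{m-i-1}s^{j+i}F(-m+j).$$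
   Context: $X_1,X_2,\dots$ are i.i.d. copies of $X$, $\theta_1,\theta_2,\dots$ i.i.d. copies of $\theta$, all mutually independent. $\varphi(u)=\mathbb{P}\big(\sup_{n\ge1}\sum_{i=1}^n(X_i-c\theta_i)<u\big)$ for $u\in\mathbb{N}_0$. $\mathcal M=\big(\sup_{n\ge1}\sum_{i=1}^n(X_i-c\theta_i)\big)^+$ with $a^+=\max\{0,a\}$, and $\pi_i=\mathbb{P}(\mathcal M=i)$, $i\in\mathbb{N}_0$. For a non-negative integer-valued $Z$, $G_Z(s)=\mathbb{E}s^Z=\sum_k\mathbb{P}(Z=k)s^k$; $G_{X-c\theta}(s)=G_X(s)G_{c\theta}(1/s)$ for $0<|s|\le1$. $\Xi(s)=\sum_{i\ge0}\varphi(i+1)s^i$ for $|s|<1$. For $j\in\mathbb{Z}$: $f(j)=\mathbb{P}(X-c\theta=j)$, $F(j)=\mathbb{P}(X-c\theta\le j)$. *)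

theory Defs
  imports "HOL-Probability.Probability"
begin

text \<open>Random walk S_n = sum_{i<=n} (X_i - c theta_i) (indices shifted to start at 0).
  The supremum is taken in the extended reals.\<close>

definition walk_sup :: "(nat \<Rightarrow> 'a \<Rightarrow> real) \<Rightarrow> (nat \<Rightarrow> 'a \<Rightarrow> real) \<Rightarrow> real \<Rightarrow> 'a \<Rightarrow> ereal" where
  "walk_sup X \<theta> c \<omega> = (SUP n. ereal (\<Sum>i\<le>n. X i \<omega> - c * \<theta> i \<omega>))"

definition surv_phi :: "'a measure \<Rightarrow> (nat \<Rightarrow> 'a \<Rightarrow> real) \<Rightarrow> (nat \<Rightarrow> 'a \<Rightarrow> real) \<Rightarrow> real \<Rightarrow> nat \<Rightarrow> real" where
  "surv_phi M X \<theta> c u = measure M {\<omega> \<in> space M. walk_sup X \<theta> c \<omega> < ereal (real u)}"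

definition pi_M :: "'a measure \<Rightarrow> (nat \<Rightarrow> 'a \<Rightarrow> real) \<Rightarrow> (nat \<Rightarrow> 'a \<Rightarrow> real) \<Rightarrow> real \<Rightarrow> nat \<Rightarrow> real" where
  "pi_M M X \<theta> c i = measure M {\<omega> \<in> space M. max 0 (walk_sup X \<theta> c \<omega>) = ereal (real i)}"

definition pgf :: "'a measure \<Rightarrow> ('a \<Rightarrow> real) \<Rightarrow> complex \<Rightarrow> complex" where
  "pgf M Z s = (\<Sum>k. complex_of_real (measure M {\<omega> \<in> space M. Z \<omega> = real k}) * s ^ k)"

text \<open>G_{X - c theta}(s) = G_X(s) G_{c theta}(1/s)\<close>
definition pgf_diff :: "'a measure \<Rightarrow> ('a \<Rightarrow> real) \<Rightarrow> ('a \<Rightarrow> real) \<Rightarrow> complex \<Rightarrow> complex" where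
  "pgf_diff M Z W s = pgf M Z s * pgf M W (1 / s)"

definition pgf_M :: "'a measure \<Rightarrow> (nat \<Rightarrow> 'a \<Rightarrow> real) \<Rightarrow> (nat \<Rightarrow> 'a \<Rightarrow> real) \<Rightarrow> real \<Rightarrow> complex \<Rightarrow> complex" where
  "pgf_M M X \<theta> c s = (\<Sum>i. complex_of_real (pi_M M X \<theta> c i) * s ^ i)"

definition Xi :: "'a measure \<Rightarrow> (nat \<Rightarrow> 'a \<Rightarrow> real) \<Rightarrow> (nat \<Rightarrow> 'a \<Rightarrow> real) \<Rightarrow> real \<Rightarrow> complex \<Rightarrow> complex" where
  "Xi M X \<theta> c s = (\<Sum>i. complex_of_real (surv_phi M X \<theta> c (i + 1)) * s ^ i)"

definition f_pmf :: "'a measure \<Rightarrow> ('a \<Rightarrow> real) \<Rightarrow> ('a \<Rightarrow> real) \<Rightarrow> real \<Rightarrow> int \<Rightarrow> real" where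
  "f_pmf M X \<theta> c j = measure M {\<omega> \<in> space M. X \<omega> - c * \<theta> \<omega> = real_of_int j}"

definition F_cdf :: "'a measure \<Rightarrow> ('a \<Rightarrow> real) \<Rightarrow> ('a \<Rightarrow> real) \<Rightarrow> real \<Rightarrow> int \<Rightarrow> real" where
  "F_cdf M X \<theta> c j = measure M {\<omega> \<in> space M. X \<omega> - c * \<theta> \<omega> \<le> real_of_int j}"

end

theory Submission
  imports Defs
begin

text \<open>
  Let \<open>Y\<^sub>i = X\<^sub>i - c\<theta>\<^sub>i\<close>, let \<open>S\<close> be the walk of partial sums of the \<open>Y\<^sub>i\<close> and \<open>\<M> = (sup S)\<^sup>+\<close>.
  Splitting off the first step gives Lindley's recursion \<open>\<M> = (Y\<^sub>0 + \<M>')\<^sup>+\<close>, where \<open>\<M>'\<close> is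
  built from the shifted walk: it has the law of \<open>\<M>\<close> and is independent of \<open>Y\<^sub>0\<close>.
  Since \<open>Y\<^sub>0 \<ge> -m\<close>, the positive part only acts on the events \<open>{\<M>' = i, Y\<^sub>0 = -j}\<close> with
  \<open>i < j \<le> m\<close>, and there it replaces \<open>s ^ (i - j)\<close> by \<open>1\<close>. Taking expectations of
  \<open>s ^ \<M>\<close> therefore gives \<open>G\<^sub>\<M>(s) = G\<^sub>Y\<^sub>0(s) G\<^sub>\<M>(s) + \<Sum>\<^sub>i\<^sub>,\<^sub>j \<pi>\<^sub>i f(-j) (1 - s ^ (i - j))\<close>,
  which is (1). Dividing (1) by \<open>1 - s\<close> for real \<open>s\<close> and letting \<open>s \<uparrow> 1\<close> gives (2), and (3)
  is (1) rewritten through \<open>\<Xi>(s) = G\<^sub>\<M>(s) / (1 - s)\<close>.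
  That \<open>sup S < \<infinity>\<close> almost surely comes from the net profit condition, which bounds
  \<open>\<bbbP>(sup S \<le> m)\<close> away from 0; as \<open>{sup S < \<infinity>}\<close> is a tail event, Kolmogorov's 0-1 law
  gives probability 1.
\<close>

section \<open>Suprema of partial sums\<close>

fun max_psum :: "(nat \<Rightarrow> real) \<Rightarrow> nat \<Rightarrow> real" where
  "max_psum y 0 = y 0"
| "max_psum y (Suc n) = y 0 + max 0 (max_psum (\<lambda>i. y (Suc i)) n)"

lemma max_psum_le_iff: "max_psum y n \<le> t \<longleftrightarrow> (\<forall>k\<le>n. (\<Sum>i\<le>k. y i) \<le> t)"
proof (induction n arbitrary: y t)
  case 0
  then show ?case by simp
next
  case (Suc n)
  have "max_psum y (Suc n) \<le> t \<longleftrightarrow> y 0 \<le> t \<and> max_psum (\<lambda>i. y (Suc i)) n \<le> t - y 0"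
    by auto
  also have "\<dots> \<longleftrightarrow> y 0 \<le> t \<and> (\<forall>k\<le>n. (\<Sum>i\<le>k. y (Suc i)) \<le> t - y 0)"
    using Suc by simp
  also have "\<dots> \<longleftrightarrow> (\<forall>k\<le>Suc n. (\<Sum>i\<le>k. y i) \<le> t)"
  proof safe
    fix k assume "y 0 \<le> t" "\<forall>k\<le>n. (\<Sum>i\<le>k. y (Suc i)) \<le> t - y 0" "k \<le> Suc n"
    then show "(\<Sum>i\<le>k. y i) \<le> t"
      by (cases k) (auto simp: sum.atMost_Suc_shift simp del: sum.atMost_Suc)
  next
    assume "\<forall>k\<le>Suc n. (\<Sum>i\<le>k. y i) \<le> t"
    then show "y 0 \<le> t"
      by (metis atMost_0 le0 sum.insert finite.emptyI empty_iff sum.empty add.right_neutral)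
  next
    fix k assume "\<forall>k\<le>Suc n. (\<Sum>i\<le>k. y i) \<le> t" "k \<le> n"
    then have "(\<Sum>i\<le>Suc k. y i) \<le> t"
      by (simp del: sum.atMost_Suc)
    then show "(\<Sum>i\<le>k. y (Suc i)) \<le> t - y 0"
      by (simp add: sum.atMost_Suc_shift del: sum.atMost_Suc)
  qed
  finally show ?case .
qed

lemma max_psum_mono: "max_psum y n \<le> max_psum y (Suc n)"
  using max_psum_le_iff[of y "Suc n" "max_psum y (Suc n)"] max_psum_le_iff[of y n "max_psum y (Suc n)"]
  by auto

lemma measurable_max_psum[measurable]:
  "(\<lambda>y. max_psum y n) \<in> borel_measurable (PiM (UNIV::nat set) (\<lambda>_. borel))"
proof (induction n)
  case (Suc n)
  have "(\<lambda>y::nat\<Rightarrow>real. \<lambda>i. y (Suc i)) \<in> measurable (PiM UNIV (\<lambda>_. borel)) (PiM UNIV (\<lambda>_. borel))"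
    by (rule measurable_PiM_single') (auto simp: space_PiM)
  from measurable_comp[OF this Suc] show ?case
    by (simp add: comp_def)
qed simp

definition sup_psum :: "(nat \<Rightarrow> real) \<Rightarrow> ereal" where
  "sup_psum y = (SUP n. ereal (\<Sum>i\<le>n. y i))"

lemma measurable_sup_psum[measurable]: "sup_psum \<in> borel_measurable (PiM (UNIV::nat set) (\<lambda>_. borel))"
  unfolding sup_psum_def by measurable

lemma sup_psum_le_iff: "sup_psum y \<le> ereal t \<longleftrightarrow> (\<forall>n. max_psum y n \<le> t)"
  unfolding sup_psum_def SUP_le_iff using max_psum_le_iff by auto

lemma sup_psum_Lindley: "sup_psum y = ereal (y 0) + max 0 (sup_psum (\<lambda>i. y (Suc i)))"
proof -
  have shift: "(\<Sum>i\<le>Suc n. y i) = y 0 + (\<Sum>i\<le>n. y (Suc i))" for n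
    by (simp add: sum.atMost_Suc_shift del: sum.atMost_Suc)
  have "sup_psum y = max (ereal (y 0)) (SUP n. ereal (\<Sum>i\<le>Suc n. y i))"
    unfolding sup_psum_def
  proof (rule antisym)
    show "(SUP n. ereal (\<Sum>i\<le>n. y i)) \<le> max (ereal (y 0)) (SUP n. ereal (\<Sum>i\<le>Suc n. y i))"
    proof (rule SUP_least)
      fix n
      show "ereal (\<Sum>i\<le>n. y i) \<le> max (ereal (y 0)) (SUP n. ereal (\<Sum>i\<le>Suc n. y i))"
      proof (cases n)
        case (Suc k)
        then show ?thesis
          by (intro max.coboundedI2) (rule SUP_upper2[of k], auto simp del: sum.atMost_Suc)
      qed simp
    qed
    show "max (ereal (y 0)) (SUP n. ereal (\<Sum>i\<le>Suc n. y i)) \<le> (SUP n. ereal (\<Sum>i\<le>n. y i))"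
    proof (rule max.boundedI)
      show "ereal (y 0) \<le> (SUP n. ereal (\<Sum>i\<le>n. y i))"
        by (rule SUP_upper2[of 0]) auto
      show "(SUP n. ereal (\<Sum>i\<le>Suc n. y i)) \<le> (SUP n. ereal (\<Sum>i\<le>n. y i))"
        by (rule SUP_least, rule SUP_upper2) (auto simp del: sum.atMost_Suc)
    qed
  qed
  also have "(SUP n. ereal (\<Sum>i\<le>Suc n. y i)) = ereal (y 0) + sup_psum (\<lambda>i. y (Suc i))"
    unfolding sup_psum_def shift plus_ereal.simps(1)[symmetric]
    by (subst SUP_ereal_add_right) auto
  also have "max (ereal (y 0)) (ereal (y 0) + sup_psum (\<lambda>i. y (Suc i))) =
      ereal (y 0) + max 0 (sup_psum (\<lambda>i. y (Suc i)))"
    by (cases "sup_psum (\<lambda>i. y (Suc i))") (auto simp: max_def)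
  finally show ?thesis .
qed

lemma sup_psum_finite_shift: "sup_psum y < \<infinity> \<longleftrightarrow> sup_psum (\<lambda>i. y (Suc i)) < \<infinity>"
  by (subst sup_psum_Lindley) (cases "sup_psum (\<lambda>i. y (Suc i))"; auto simp: max_def)

lemma sup_psum_finite_shift_n: "sup_psum y < \<infinity> \<longleftrightarrow> sup_psum (\<lambda>i. y (n + i)) < \<infinity>"
proof (induction n)
  case (Suc n)
  then show ?case
    using sup_psum_finite_shift[of "\<lambda>i. y (n + i)"] by simp
qed simp

definition ereal_floor_nat :: "ereal \<Rightarrow> nat" where
  "ereal_floor_nat e = nat \<lfloor>real_of_ereal e\<rfloor>"

lemma measurable_ereal_floor_nat[measurable]: "ereal_floor_nat \<in> measurable borel (count_space UNIV)"
  unfolding ereal_floor_nat_def by measurable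

lemma max_0_sup_psum_Ints:
  assumes y: "\<And>i. y i \<in> \<int>" and fin: "sup_psum y < \<infinity>"
  shows "max 0 (sup_psum y) = ereal (real (ereal_floor_nat (sup_psum y)))"
proof -
  have "ereal (y 0) \<le> sup_psum y"
    unfolding sup_psum_def by (rule SUP_upper2[of 0]) auto
  then obtain r where r: "sup_psum y = ereal r"
    using fin by (cases "sup_psum y") auto
  have "ereal (\<Sum>i\<le>n. y i) \<le> ereal (real_of_int \<lfloor>r\<rfloor>)" for n
  proof -
    have "(\<Sum>i\<le>n. y i) \<in> \<int>"
      using y by (intro Ints_sum) auto
    then obtain z where z: "(\<Sum>i\<le>n. y i) = of_int z"
      by (auto elim: Ints_cases)
    have "ereal (\<Sum>i\<le>n. y i) \<le> sup_psum y"
      unfolding sup_psum_def by (rule SUP_upper) auto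
    then show ?thesis
      using r z by (simp add: le_floor_iff)
  qed
  then have "sup_psum y \<le> ereal (real_of_int \<lfloor>r\<rfloor>)"
    unfolding sup_psum_def by (intro SUP_least) auto
  then have "r = real_of_int \<lfloor>r\<rfloor>"
    using r by (simp add: antisym)
  then show ?thesis
    using r by (cases "0 \<le> r") (auto simp: ereal_floor_nat_def max_def)
qed

section \<open>Generating functions as expectations\<close>

lemma (in prob_space) pgf_sums_integral:
  fixes Z :: "'a \<Rightarrow> nat" and s :: complex
  assumes Z[measurable]: "Z \<in> measurable M (count_space UNIV)"
    and summable: "summable (\<lambda>i. prob {\<omega>\<in>space M. Z \<omega> = i} * norm s ^ i)"
  shows "(\<lambda>k. complex_of_real (prob {\<omega>\<in>space M. Z \<omega> = k}) * s ^ k) sums (\<integral>\<omega>. s ^ Z \<omega> \<partial>M)"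
proof -
  define f where "f k \<omega> = complex_of_real (indicator {\<omega>\<in>space M. Z \<omega> = k} \<omega>) * s ^ k" for k \<omega>
  have [measurable]: "f k \<in> borel_measurable M" for k
    unfolding f_def by measurable
  have integrable_f: "integrable M (f k)" for k
    by (rule Bochner_Integration.integrable_bound[where f="\<lambda>_. s ^ k"])
       (auto simp: f_def indicator_def norm_mult)
  have integral_norm_f: "(\<integral>x. norm (f i x) \<partial>M) = prob {\<omega>\<in>space M. Z \<omega> = i} * norm s ^ i" for i
  proof -
    have "(\<lambda>x. norm (f i x)) = (\<lambda>x. indicator {\<omega>\<in>space M. Z \<omega> = i} x * norm s ^ i)"
      by (auto simp: f_def fun_eq_iff indicator_def norm_mult norm_power)
    then show ?thesis by simp
  qed
  have suminf_f: "(\<Sum>i. f i x) = s ^ Z x" if "x \<in> space M" for x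
  proof -
    have "f i x = (if i = Z x then s ^ i else 0)" for i
      using that by (auto simp: f_def)
    then show ?thesis
      using sums_single[of "Z x" "\<lambda>i. s ^ i"] by (simp add: sums_iff)
  qed
  have "(\<lambda>i. integral\<^sup>L M (f i)) sums (\<integral>x. (\<Sum>i. f i x) \<partial>M)"
  proof (rule sums_integral[OF integrable_f])
    show "AE x in M. summable (\<lambda>i. norm (f i x))"
    proof (rule AE_I2, rule summable_finite[of "{Z x}" for x])
      fix x n assume "x \<in> space M" "n \<notin> {Z x}"
      then show "norm (f n x) = 0"
        by (auto simp: f_def)
    qed simp
    show "summable (\<lambda>i. \<integral>x. norm (f i x) \<partial>M)"
      using summable by (simp add: integral_norm_f)
  qed
  also have "(\<integral>x. (\<Sum>i. f i x) \<partial>M) = (\<integral>\<omega>. s ^ Z \<omega> \<partial>M)"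
    by (rule Bochner_Integration.integral_cong) (auto simp: suminf_f)
  finally show ?thesis
    by (simp add: f_def)
qed

lemma (in prob_space) pgf_sums_integral_norm_le_1:
  fixes Z :: "'a \<Rightarrow> nat" and s :: complex
  assumes Z[measurable]: "Z \<in> measurable M (count_space UNIV)" and s: "norm s \<le> 1"
  shows "(\<lambda>k. complex_of_real (prob {\<omega>\<in>space M. Z \<omega> = k}) * s ^ k) sums (\<integral>\<omega>. s ^ Z \<omega> \<partial>M)"
proof (rule pgf_sums_integral[OF Z])
  have "(\<lambda>n. \<P>(x in M. Z x = n)) sums \<P>(x in M. True)"
    by (rule prob_sums) auto
  then have "summable (\<lambda>i. prob {\<omega>\<in>space M. Z \<omega> = i})"
    by (auto simp: sums_iff)
  then show "summable (\<lambda>i. prob {\<omega>\<in>space M. Z \<omega> = i} * norm s ^ i)"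
    by (rule summable_comparison_test')
       (use s in \<open>auto simp: abs_mult mult_left_le power_le_one\<close>)
qed

lemma (in prob_space) pgf_sums_integral_AE_bounded:
  fixes Z :: "'a \<Rightarrow> nat" and s :: complex
  assumes Z[measurable]: "Z \<in> measurable M (count_space UNIV)" and b: "AE \<omega> in M. Z \<omega> \<le> b"
  shows "(\<lambda>k. complex_of_real (prob {\<omega>\<in>space M. Z \<omega> = k}) * s ^ k) sums (\<integral>\<omega>. s ^ Z \<omega> \<partial>M)"
proof (rule pgf_sums_integral[OF Z])
  have "prob {\<omega>\<in>space M. Z \<omega> = i} = 0" if "b < i" for i
  proof -
    have "AE \<omega> in M. \<omega> \<notin> {\<omega>\<in>space M. Z \<omega> = i}"
      using b by (rule AE_mp) (use that in auto)
    then show ?thesis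
      by (subst prob_eq_0) auto
  qed
  then show "summable (\<lambda>i. prob {\<omega>\<in>space M. Z \<omega> = i} * norm s ^ i)"
    by (intro summable_finite[of "{..b}"]) auto
qed

lemma (in prob_space) integrable_power_norm_le_1:
  fixes s :: complex
  assumes "Z \<in> measurable M (count_space UNIV)" and "norm s \<le> 1"
  shows "integrable M (\<lambda>\<omega>. s ^ Z \<omega>)"
  by (rule Bochner_Integration.integrable_bound[where f="\<lambda>_. 1::real"])
     (use assms in \<open>auto simp: norm_power power_le_one\<close>)

lemma power_int_le_inverse_power:
  fixes r :: real
  assumes r: "0 < r" "r \<le> 1" and z: "- int m \<le> z"
  shows "r powi z \<le> (1 / r) ^ m"
proof -
  have "r powi z = r powi (z + int m) * r powi (- int m)"
    using r by (simp add: power_int_add[symmetric])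
  also have "r powi (z + int m) = r ^ nat (z + int m)"
    using z by (metis nat_0_le power_int_of_nat le_add_same_cancel2 add.commute
        diff_ge_0_iff_ge diff_minus_eq_add)
  also have "\<dots> \<le> 1"
    using r by (simp add: power_le_one)
  also have "r powi (- int m) = (1 / r) ^ m"
    by (simp add: power_int_minus power_inverse divide_inverse)
  finally show ?thesis
    using r by (simp add: mult_left_le_one_le)
qed

text \<open>The truncation term of Lindley's recursion on the event \<open>{\<M>' = i\<^sub>0, Y\<^sub>0 = z}\<close>.\<close>
lemma sum_truncation_indicator:
  fixes s :: complex and i0 :: nat and z :: int
  assumes z: "- int m \<le> z"
  shows "(\<Sum>i<m. \<Sum>j\<in>{i+1..m}. (if i0 = i \<and> z = - int j then 1 else 0) * (1 - s powi (int i - int j)))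
       = (if z + int i0 < 0 then 1 - s powi (z + int i0) else 0)"
proof -
  have "(\<Sum>i<m. \<Sum>j\<in>{i+1..m}. (if i0 = i \<and> z = - int j then 1 else 0) * (1 - s powi (int i - int j)))
      = (\<Sum>i<m. if i = i0 then (if nat (-z) \<in> {i0+1..m} \<and> z < 0 then 1 - s powi (z + int i0) else 0) else 0)"
  proof (intro sum.cong refl)
    fix i
    have "(\<Sum>j\<in>{i+1..m}. (if i0 = i \<and> z = - int j then 1 else 0) * (1 - s powi (int i - int j)))
        = (\<Sum>j\<in>{i+1..m}. if j = nat (-z) then (if i = i0 \<and> z < 0 then 1 - s powi (z + int i0) else 0) else 0)"
      by (intro sum.cong refl) auto
    also have "\<dots> = (if i = i0 then (if nat (-z) \<in> {i0+1..m} \<and> z < 0 then 1 - s powi (z + int i0) else 0) else 0)"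
      by (subst sum.delta) auto
    finally show "(\<Sum>j\<in>{i+1..m}. (if i0 = i \<and> z = - int j then 1 else 0) * (1 - s powi (int i - int j))) = \<dots>" .
  qed
  also have "\<dots> = (if z + int i0 < 0 then 1 - s powi (z + int i0) else 0)"
    using z by (auto simp: sum.delta')
  finally show ?thesis .
qed

lemma power_mult_geometric_sum:
  fixes s :: complex
  assumes "i < l" "l \<le> m" "s \<noteq> 0"
  shows "s ^ i * ((s - 1) * (\<Sum>j\<in>{m-l..m-i-1}. s ^ j)) = s ^ m * (1 - s powi (int i - int l))"
proof -
  have "(s - 1) * (\<Sum>j\<in>{m-l..m-i-1}. s ^ j) = - ((1 - s) * (\<Sum>j\<in>{m-l..m-i-1}. s ^ j))"
    by (simp add: algebra_simps)
  also have "(1 - s) * (\<Sum>j\<in>{m-l..m-i-1}. s ^ j) = s ^ (m - l) - s ^ Suc (m - i - 1)"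
    by (rule sum_gp_multiplied) (use assms in auto)
  also have "Suc (m - i - 1) = m - i"
    using assms by simp
  finally have "(s - 1) * (\<Sum>j\<in>{m-l..m-i-1}. s ^ j) = s ^ (m - i) - s ^ (m - l)"
    by simp
  then have "s ^ i * ((s - 1) * (\<Sum>j\<in>{m-l..m-i-1}. s ^ j)) = s ^ i * s ^ (m - i) - s ^ i * s ^ (m - l)"
    by (simp only: right_diff_distrib)
  also have "s ^ i * s ^ (m - i) = s ^ m"
    using assms by (simp add: power_add[symmetric])
  also have "s ^ i * s ^ (m - l) = s ^ m * s powi (int i - int l)"
  proof -
    have "s ^ m * s powi (int i - int l) = s powi (int m + (int i - int l))"
      using assms by (simp add: power_int_add)
    also have "int m + (int i - int l) = int (m - l + i)"
      using assms by auto
    finally have "s ^ m * s powi (int i - int l) = s ^ (m - l + i)"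
      by (metis power_int_of_nat)
    then show ?thesis
      by (simp add: power_add add.commute)
  qed
  finally show ?thesis
    by (simp add: algebra_simps)
qed

lemma truncation_sum_reindex:
  fixes s :: complex and a :: "nat \<Rightarrow> complex"
  assumes "i < m" and "s \<noteq> 0"
  shows "s ^ m * (\<Sum>j\<in>{i+1..m}. (1 - s powi (int i - int j)) * a j)
       = (s - 1) * (\<Sum>j\<in>{0..m-i-1}. s ^ (j + i) * (\<Sum>l\<in>{m-j..m}. a l))"
proof -
  have "(\<Sum>j\<in>{0..m-i-1}. s ^ (j + i) * (\<Sum>l\<in>{m-j..m}. a l))
      = (\<Sum>j\<in>{0..m-i-1}. \<Sum>l\<in>{l\<in>{i+1..m}. m - j \<le> l}. s ^ (j + i) * a l)"
  proof (intro sum.cong refl)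
    fix j assume "j \<in> {0..m-i-1}"
    then have "{m-j..m} = {l\<in>{i+1..m}. m - j \<le> l}"
      using assms by auto
    then show "s ^ (j + i) * (\<Sum>l\<in>{m-j..m}. a l) = (\<Sum>l\<in>{l\<in>{i+1..m}. m - j \<le> l}. s ^ (j + i) * a l)"
      by (simp add: sum_distrib_left)
  qed
  also have "\<dots> = (\<Sum>l\<in>{i+1..m}. \<Sum>j\<in>{j\<in>{0..m-i-1}. m - j \<le> l}. s ^ (j + i) * a l)"
    by (rule sum.swap_restrict) auto
  also have "\<dots> = (\<Sum>l\<in>{i+1..m}. a l * (s ^ i * (\<Sum>j\<in>{m-l..m-i-1}. s ^ j)))"
  proof (intro sum.cong refl)
    fix l assume "l \<in> {i+1..m}"
    then have "{j\<in>{0..m-i-1}. m - j \<le> l} = {m-l..m-i-1}"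
      by auto
    then show "(\<Sum>j\<in>{j\<in>{0..m-i-1}. m - j \<le> l}. s ^ (j + i) * a l) = a l * (s ^ i * (\<Sum>j\<in>{m-l..m-i-1}. s ^ j))"
      by (simp add: sum_distrib_left power_add mult_ac)
  qed
  finally have "(s - 1) * (\<Sum>j\<in>{0..m-i-1}. s ^ (j + i) * (\<Sum>l\<in>{m-j..m}. a l))
      = (\<Sum>l\<in>{i+1..m}. a l * (s ^ i * ((s - 1) * (\<Sum>j\<in>{m-l..m-i-1}. s ^ j))))"
    by (simp add: sum_distrib_left mult_ac)
  also have "\<dots> = (\<Sum>l\<in>{i+1..m}. a l * (s ^ m * (1 - s powi (int i - int l))))"
    using assms by (intro sum.cong refl arg_cong[where f="(*) _"] power_mult_geometric_sum) auto
  finally show ?thesis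
    by (simp add: sum_distrib_left mult_ac)
qed

definition diff_quot_power_int :: "real \<Rightarrow> int \<Rightarrow> real" where
  "diff_quot_power_int s k = (1 - s powi k) / (1 - s)"

lemma diff_quot_power_int_tendsto:
  assumes "sq \<longlonglongrightarrow> 1" and "\<And>n. sq n \<noteq> 1"
  shows "(\<lambda>n. diff_quot_power_int (sq n) k) \<longlonglongrightarrow> real_of_int k"
proof -
  have "((\<lambda>x::real. x powi k) has_field_derivative (of_int k * 1 powi (k - 1) * 1)) (at 1)"
    by (rule DERIV_power_int[OF DERIV_ident]) simp
  then have "((\<lambda>y::real. (y powi k - 1 powi k) / (y - 1)) \<longlongrightarrow> real_of_int k) (at 1)"
    by (simp add: has_field_derivative_iff)
  moreover have "(\<lambda>y::real. (y powi k - 1 powi k) / (y - 1)) = (\<lambda>y. diff_quot_power_int y k)"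
    by (rule ext) (simp add: diff_quot_power_int_def, metis minus_diff_eq minus_divide_divide)
  moreover have "filterlim sq (at 1) sequentially"
    using assms by (simp add: filterlim_at)
  ultimately show ?thesis
    using filterlim_compose by fastforce
qed

lemma abs_diff_quot_power_int_le:
  fixes s :: real
  assumes s: "1/2 \<le> s" "s < 1" and k: "- int m \<le> k"
  shows "\<bar>diff_quot_power_int s k\<bar> \<le> \<bar>real_of_int k\<bar> + real m * 2 ^ m"
proof -
  have geom_le: "0 \<le> (\<Sum>i<n. s ^ i) \<and> (\<Sum>i<n. s ^ i) \<le> real n" for n
  proof -
    have "(\<Sum>i<n. s ^ i) \<le> (\<Sum>i<n. (1::real))"
      using s by (intro sum_mono power_le_one) auto
    then show ?thesis
      using s by (auto intro: sum_nonneg)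
  qed
  show ?thesis
  proof (cases "0 \<le> k")
    case True
    then obtain n where n: "k = int n"
      by (metis nonneg_eq_int)
    then have "diff_quot_power_int s k = (\<Sum>i<n. s ^ i)"
      using s by (simp add: diff_quot_power_int_def one_diff_power_eq)
    moreover have "0 \<le> real m * 2 ^ m"
      by simp
    ultimately show ?thesis
      using geom_le[of n] n by (simp add: add_increasing2)
  next
    case False
    then obtain n where n: "k = - int n"
      by (metis neg_int_cases not_le)
    with k have "n \<le> m"
      by simp
    have sn: "0 < s ^ n" "1 / s ^ n \<le> 2 ^ n"
    proof -
      have "(1/2) ^ n \<le> s ^ n"
        using s by (intro power_mono) auto
      then show "0 < s ^ n" "1 / s ^ n \<le> 2 ^ n"
        using s by (auto simp: field_simps power_divide)
    qed
    have "diff_quot_power_int s k = - ((1 - s ^ n) / (1 - s)) / s ^ n"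
      using sn s by (simp add: diff_quot_power_int_def n power_int_minus field_simps)
    also have "(1 - s ^ n) / (1 - s) = (\<Sum>i<n. s ^ i)"
      using s by (simp add: one_diff_power_eq)
    finally have "\<bar>diff_quot_power_int s k\<bar> = (\<Sum>i<n. s ^ i) * (1 / s ^ n)"
      using geom_le[of n] sn by (simp add: abs_div)
    also have "\<dots> \<le> real n * 2 ^ n"
      using geom_le[of n] sn by (intro mult_mono) auto
    also have "\<dots> \<le> real m * 2 ^ m"
      using \<open>n \<le> m\<close> by (intro mult_mono power_increasing) auto
    finally show ?thesis
      by simp
  qed
qed

locale risk_model = prob_space M for M :: "'a measure" +
  fixes X \<theta> :: "nat \<Rightarrow> 'a \<Rightarrow> real" and c :: real and m :: nat
  assumes measurable_X[measurable]: "\<And>i. X i \<in> borel_measurable M"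
    and measurable_\<theta>[measurable]: "\<And>i. \<theta> i \<in> borel_measurable M"
    and indep: "indep_vars (\<lambda>_. borel)
                  (\<lambda>k. case k of Inl i \<Rightarrow> X i | Inr i \<Rightarrow> \<theta> i) (UNIV :: (nat + nat) set)"
    and distr_X: "\<And>i. distr M borel (X i) = distr M borel (X 0)"
    and distr_\<theta>: "\<And>i. distr M borel (\<theta> i) = distr M borel (\<theta> 0)"
    and X_Nats: "\<And>i \<omega>. \<omega> \<in> space M \<Longrightarrow> X i \<omega> \<in> \<nat>"
    and c\<theta>_Nats: "\<And>i \<omega>. \<omega> \<in> space M \<Longrightarrow> c * \<theta> i \<omega> \<in> \<nat>"
    and prob_c\<theta>0_le: "prob {\<omega> \<in> space M. c * \<theta> 0 \<omega> \<le> real m} = 1"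
    and integrable_X0: "integrable M (X 0)"
    and integrable_\<theta>0: "integrable M (\<theta> 0)"
    and net_profit: "c * integral\<^sup>L M (\<theta> 0) - integral\<^sup>L M (X 0) > 0"
begin

definition coord :: "nat + nat \<Rightarrow> 'a \<Rightarrow> real" where
  "coord k = (case k of Inl i \<Rightarrow> X i | Inr i \<Rightarrow> \<theta> i)"

definition shift_index :: "nat + nat \<Rightarrow> nat + nat" where
  "shift_index k = (case k of Inl i \<Rightarrow> Inl (Suc i) | Inr i \<Rightarrow> Inr (Suc i))"

definition coord_law :: "nat + nat \<Rightarrow> real measure" where
  "coord_law k = (case k of Inl i \<Rightarrow> distr M borel (X 0) | Inr i \<Rightarrow> distr M borel (\<theta> 0))"

abbreviation coord_space :: "(nat + nat \<Rightarrow> real) measure" where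
  "coord_space \<equiv> PiM UNIV (\<lambda>_. borel)"

lemma measurable_coord[measurable]: "coord k \<in> borel_measurable M"
  by (cases k) (auto simp: coord_def)

lemma distr_coord: "distr M borel (coord k) = coord_law k"
  using distr_X distr_\<theta> by (cases k) (auto simp: coord_def coord_law_def)

lemma sets_coord_law[measurable_cong]: "sets (coord_law k) = sets borel"
  by (cases k) (auto simp: coord_law_def)

lemma measurable_coords[measurable]: "(\<lambda>\<omega>. \<lambda>k. coord k \<omega>) \<in> measurable M coord_space"
  by (rule measurable_PiM_single') (auto simp: space_PiM)

lemma distr_coords: "distr M coord_space (\<lambda>\<omega>. \<lambda>k. coord k \<omega>) = PiM UNIV coord_law"
proof -
  have "distr M coord_space (\<lambda>x. \<lambda>i\<in>UNIV. coord i x) = PiM UNIV (\<lambda>i. distr M borel (coord i))"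
    using indep_vars_iff_distr_eq_PiM[where I=UNIV and M'="\<lambda>_. borel" and X=coord] indep measurable_coord
    by (simp add: coord_def[abs_def])
  then show ?thesis
    by (simp add: distr_coord restrict_UNIV)
qed

lemma distr_shifted_coords:
  "distr M coord_space (\<lambda>\<omega>. \<lambda>k. coord (shift_index k) \<omega>) = PiM UNIV coord_law"
proof -
  have shift[measurable]: "(\<lambda>\<omega>. \<lambda>k. \<omega> (shift_index k)) \<in> measurable coord_space coord_space"
    by (rule measurable_PiM_single') (auto simp: space_PiM)
  have "distr M coord_space (\<lambda>\<omega>. \<lambda>k. coord (shift_index k) \<omega>) =
      distr (distr M coord_space (\<lambda>\<omega>. \<lambda>k. coord k \<omega>)) coord_space (\<lambda>\<omega>. \<lambda>k. \<omega> (shift_index k))"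
    by (subst distr_distr) (auto simp: comp_def)
  also have "\<dots> = distr (PiM UNIV coord_law) (PiM UNIV (\<lambda>i. coord_law (shift_index i)))
      (\<lambda>\<omega>. \<lambda>n\<in>UNIV. \<omega> (shift_index n))"
    unfolding distr_coords
    by (intro distr_cong) (auto simp: restrict_UNIV sets_coord_law intro!: sets_PiM_cong)
  also have "\<dots> = PiM UNIV (\<lambda>i. coord_law (shift_index i))"
  proof (rule distr_PiM_reindex)
    show "inj_on shift_index UNIV"
      unfolding inj_def shift_index_def by (auto split: sum.splits)
    show "prob_space (coord_law i)" for i
      using distr_coord[of i] by (metis prob_space_distr measurable_coord)
  qed auto
  also have "(\<lambda>i. coord_law (shift_index i)) = coord_law"
    by (auto simp: fun_eq_iff shift_index_def coord_law_def split: sum.splits)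
  finally show ?thesis .
qed

definition Y :: "nat \<Rightarrow> 'a \<Rightarrow> real" where
  "Y i \<omega> = X i \<omega> - c * \<theta> i \<omega>"

lemma measurable_Y[measurable]: "Y i \<in> borel_measurable M"
  unfolding Y_def by measurable

lemma measurable_Y_seq[measurable]: "(\<lambda>\<omega>. \<lambda>i. Y i \<omega>) \<in> measurable M (PiM UNIV (\<lambda>_. borel))"
  by (rule measurable_PiM_single') (auto simp: space_PiM)

lemma measurable_shifted_Y_seq[measurable]:
  "(\<lambda>\<omega>. \<lambda>i. Y (Suc i) \<omega>) \<in> measurable M (PiM UNIV (\<lambda>_. borel))"
  by (rule measurable_PiM_single') (auto simp: space_PiM)

definition increments :: "(nat + nat \<Rightarrow> real) \<Rightarrow> nat \<Rightarrow> real" where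
  "increments v = (\<lambda>i. v (Inl i) - c * v (Inr i))"

lemma increments_shifted_coords: "increments (\<lambda>k. coord (shift_index k) \<omega>) = (\<lambda>i. Y (Suc i) \<omega>)"
  by (auto simp: increments_def coord_def shift_index_def Y_def)

lemma measurable_increments[measurable]: "increments \<in> measurable coord_space (PiM UNIV (\<lambda>_. borel))"
  unfolding increments_def by (rule measurable_PiM_single') (auto simp: space_PiM)

lemma distr_shifted_increments:
  assumes G: "G \<in> measurable (PiM (UNIV::nat set) (\<lambda>_. borel)) N"
  shows "distr M N (\<lambda>\<omega>. G (\<lambda>i. Y (Suc i) \<omega>)) = distr M N (\<lambda>\<omega>. G (\<lambda>i. Y i \<omega>))"
proof -
  have [measurable]: "(\<lambda>\<omega>. \<lambda>k. coord (shift_index k) \<omega>) \<in> measurable M coord_space"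
    by (rule measurable_PiM_single') (auto simp: space_PiM)
  have unshifted: "(\<lambda>i. Y i \<omega>) = increments (\<lambda>k. coord k \<omega>)" for \<omega>
    by (auto simp: increments_def coord_def Y_def)
  have "distr M N (\<lambda>\<omega>. G (\<lambda>i. Y (Suc i) \<omega>)) =
      distr (distr M coord_space (\<lambda>\<omega>. \<lambda>k. coord (shift_index k) \<omega>)) N (G \<circ> increments)"
    unfolding increments_shifted_coords[symmetric] using G by (subst distr_distr) (auto simp: comp_def)
  also have "\<dots> = distr (distr M coord_space (\<lambda>\<omega>. \<lambda>k. coord k \<omega>)) N (G \<circ> increments)"
    unfolding distr_coords distr_shifted_coords ..
  also have "\<dots> = distr M N (\<lambda>\<omega>. G (\<lambda>i. Y i \<omega>))"
    unfolding unshifted using G by (subst distr_distr) (auto simp: comp_def)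
  finally show ?thesis .
qed

lemma X_nonneg: "\<omega> \<in> space M \<Longrightarrow> 0 \<le> X i \<omega>"
  using X_Nats[of \<omega> i] by (auto elim!: Nats_cases)

lemma c\<theta>_nonneg: "\<omega> \<in> space M \<Longrightarrow> 0 \<le> c * \<theta> i \<omega>"
  using c\<theta>_Nats[of \<omega> i] by (auto elim!: Nats_cases)

lemma Y_Ints: "\<omega> \<in> space M \<Longrightarrow> Y i \<omega> \<in> \<int>"
  using X_Nats[of \<omega> i] c\<theta>_Nats[of \<omega> i] unfolding Y_def by (auto elim!: Nats_cases)

lemma integrable_X: "integrable M (X i)"
proof -
  have "integrable (distr M borel (X i)) (\<lambda>x. x) = integrable (distr M borel (X 0)) (\<lambda>x. x)"
    by (simp add: distr_X[of i])
  then show ?thesis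
    using integrable_X0 by (simp add: integrable_distr_eq)
qed

lemma integral_Y0: "integral\<^sup>L M (Y 0) = integral\<^sup>L M (X 0) - c * integral\<^sup>L M (\<theta> 0)"
  unfolding Y_def[abs_def] using integrable_X0 integrable_\<theta>0 by simp

lemma AE_c\<theta>_le: "AE \<omega> in M. \<forall>i. c * \<theta> i \<omega> \<le> real m"
proof -
  have "prob {\<omega> \<in> space M. c * \<theta> i \<omega> \<le> real m} = 1" for i
  proof -
    have [measurable]: "{t::real. c * t \<le> real m} \<in> sets borel"
      by measurable
    have "prob {\<omega> \<in> space M. c * \<theta> i \<omega> \<le> real m} = measure (distr M borel (\<theta> i)) {t. c * t \<le> real m}"
      by (subst measure_distr) (auto intro!: arg_cong[where f=prob])
    also have "\<dots> = prob {\<omega> \<in> space M. c * \<theta> 0 \<omega> \<le> real m}"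
      unfolding distr_\<theta>[of i] by (subst measure_distr) (auto intro!: arg_cong[where f=prob])
    finally show ?thesis
      using prob_c\<theta>0_le by simp
  qed
  then have "AE \<omega> in M. c * \<theta> i \<omega> \<le> real m" for i
    using AE_prob_1[of "{\<omega> \<in> space M. c * \<theta> i \<omega> \<le> real m}"] by auto
  then show ?thesis
    by (simp add: AE_all_countable)
qed

lemma AE_Y_ge: "AE \<omega> in M. \<forall>i. - real m \<le> Y i \<omega>"
  using AE_c\<theta>_le
proof (rule AE_mp, intro AE_I2 impI allI)
  fix \<omega> i assume "\<omega> \<in> space M" "\<forall>i. c * \<theta> i \<omega> \<le> real m"
  then show "- real m \<le> Y i \<omega>"
    using X_nonneg[of \<omega> i] by (auto simp: Y_def dest: spec[of _ i])
qed

lemma m_pos: "0 < m"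
proof (rule ccontr)
  assume "\<not> 0 < m"
  have "AE \<omega> in M. c * \<theta> 0 \<omega> = 0"
    using AE_c\<theta>_le
  proof (rule AE_mp, intro AE_I2 impI)
    fix \<omega> assume "\<omega> \<in> space M" "\<forall>i. c * \<theta> i \<omega> \<le> real m"
    then show "c * \<theta> 0 \<omega> = 0"
      using c\<theta>_nonneg[of \<omega> 0] \<open>\<not> 0 < m\<close> by (auto dest: spec[of _ 0])
  qed
  then have "integral\<^sup>L M (\<lambda>\<omega>. c * \<theta> 0 \<omega>) = 0"
    by (rule integral_eq_zero_AE)
  moreover have "0 \<le> integral\<^sup>L M (X 0)"
    by (rule integral_nonneg_AE) (auto intro!: AE_I2 X_nonneg)
  ultimately show False
    using net_profit by (cases "c = 0") auto
qed

subsection \<open>Finiteness of the supremum\<close>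

definition trunc_max :: "nat \<Rightarrow> 'a \<Rightarrow> real" where
  "trunc_max n \<omega> = max 0 (max_psum (\<lambda>i. Y i \<omega>) n)"

definition trunc_max' :: "nat \<Rightarrow> 'a \<Rightarrow> real" where
  "trunc_max' n \<omega> = max 0 (max_psum (\<lambda>i. Y (Suc i) \<omega>) n)"

lemma measurable_trunc_max[measurable]: "trunc_max n \<in> borel_measurable M"
  using measurable_comp[OF measurable_Y_seq measurable_max_psum[of n]]
  unfolding trunc_max_def[abs_def] comp_def by measurable

lemma measurable_trunc_max'[measurable]: "trunc_max' n \<in> borel_measurable M"
  using measurable_comp[OF measurable_shifted_Y_seq measurable_max_psum[of n]]
  unfolding trunc_max'_def[abs_def] comp_def by measurable

lemma trunc_max_Suc: "trunc_max (Suc n) \<omega> = max 0 (Y 0 \<omega> + trunc_max' n \<omega>)"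
  by (simp add: trunc_max_def trunc_max'_def)

lemma trunc_max_mono: "trunc_max n \<omega> \<le> trunc_max (Suc n) \<omega>"
  unfolding trunc_max_def using max_psum_mono by (intro max.mono) auto

lemma distr_trunc_max': "distr M borel (trunc_max' n) = distr M borel (trunc_max n)"
  using distr_shifted_increments[of "\<lambda>y. max 0 (max_psum y n)"]
  by (simp add: trunc_max_def[abs_def] trunc_max'_def[abs_def])

lemma integrable_trunc_max: "integrable M (trunc_max n)"
proof (rule Bochner_Integration.integrable_bound[where f="\<lambda>\<omega>. \<Sum>i\<le>n. X i \<omega>"])
  show "integrable M (\<lambda>\<omega>. \<Sum>i\<le>n. X i \<omega>)"
    by (auto intro: integrable_X)
  show "AE \<omega> in M. norm (trunc_max n \<omega>) \<le> norm (\<Sum>i\<le>n. X i \<omega>)"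
  proof (rule AE_I2)
    fix \<omega> assume \<omega>: "\<omega> \<in> space M"
    have "max_psum (\<lambda>i. Y i \<omega>) n \<le> (\<Sum>i\<le>n. X i \<omega>)"
      unfolding max_psum_le_iff
    proof safe
      fix k assume "k \<le> n"
      have "(\<Sum>i\<le>k. Y i \<omega>) \<le> (\<Sum>i\<le>k. X i \<omega>)"
        using c\<theta>_nonneg[OF \<omega>] by (auto simp: Y_def intro: sum_mono)
      also have "\<dots> \<le> (\<Sum>i\<le>n. X i \<omega>)"
        using \<open>k \<le> n\<close> X_nonneg[OF \<omega>] by (intro sum_mono2) auto
      finally show "(\<Sum>i\<le>k. Y i \<omega>) \<le> (\<Sum>i\<le>n. X i \<omega>)" .
    qed
    moreover have "0 \<le> (\<Sum>i\<le>n. X i \<omega>)"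
      using X_nonneg[OF \<omega>] by (auto intro: sum_nonneg)
    ultimately show "norm (trunc_max n \<omega>) \<le> norm (\<Sum>i\<le>n. X i \<omega>)"
      by (simp add: trunc_max_def)
  qed
qed simp

lemma integrable_trunc_max': "integrable M (trunc_max' n)"
proof -
  have "integrable (distr M borel (trunc_max' n)) (\<lambda>x. x) = integrable (distr M borel (trunc_max n)) (\<lambda>x. x)"
    by (simp add: distr_trunc_max')
  then show ?thesis
    using integrable_trunc_max by (simp add: integrable_distr_eq)
qed

lemma integral_trunc_max': "integral\<^sup>L M (trunc_max' n) = integral\<^sup>L M (trunc_max n)"
proof -
  have "integral\<^sup>L (distr M borel (trunc_max' n)) (\<lambda>x. x) = integral\<^sup>L (distr M borel (trunc_max n)) (\<lambda>x. x)"
    by (simp add: distr_trunc_max')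
  then show ?thesis
    by (simp add: integral_distr)
qed

lemma prob_trunc_max'_le:
  "prob {\<omega>\<in>space M. trunc_max' n \<omega> \<le> real m} = prob {\<omega>\<in>space M. trunc_max n \<omega> \<le> real m}"
proof -
  have [measurable]: "{t::real. t \<le> real m} \<in> sets borel"
    by measurable
  have "measure (distr M borel (trunc_max' n)) {t. t \<le> real m} = measure (distr M borel (trunc_max n)) {t. t \<le> real m}"
    by (simp add: distr_trunc_max')
  then show ?thesis
    by (simp add: measure_distr vimage_def Int_def conj_commute)
qed

text \<open>By Lindley's recursion
  \<open>max\<^sub>k\<^sub>\<le>\<^sub>n\<^sub>+\<^sub>1 S\<^sub>k\<^sup>+ \<le> Y\<^sub>0 + max\<^sub>k\<^sub>\<le>\<^sub>n S'\<^sub>k\<^sup>+ + m \<cdot> 1{max\<^sub>k\<^sub>\<le>\<^sub>n S'\<^sub>k\<^sup>+ \<le> m}\<close>, where \<open>S'\<close> is the shifted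
  walk; taking expectations, the maxima over \<open>S\<close> and \<open>S'\<close> cancel since they have the same law
  and the one for \<open>S\<close> increases in \<open>n\<close>.\<close>
lemma net_profit_le_prob_trunc_max:
  "c * integral\<^sup>L M (\<theta> 0) - integral\<^sup>L M (X 0) \<le> real m * prob {\<omega>\<in>space M. trunc_max n \<omega> \<le> real m}"
proof -
  let ?I = "indicator {\<omega>\<in>space M. trunc_max' n \<omega> \<le> real m} :: 'a \<Rightarrow> real"
  have integrable_Y0: "integrable M (Y 0)"
    unfolding Y_def[abs_def] using integrable_X0 integrable_\<theta>0 by simp
  have integrable_I: "integrable M ?I"
    by (rule integrable_real_indicator) (auto simp: emeasure_eq_measure)
  have "integral\<^sup>L M (trunc_max n) \<le> integral\<^sup>L M (trunc_max (Suc n))"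
    by (intro integral_mono integrable_trunc_max trunc_max_mono)
  also have "\<dots> \<le> integral\<^sup>L M (\<lambda>\<omega>. Y 0 \<omega> + trunc_max' n \<omega> + real m * ?I \<omega>)"
  proof (rule integral_mono_AE)
    show "integrable M (\<lambda>\<omega>. Y 0 \<omega> + trunc_max' n \<omega> + real m * ?I \<omega>)"
      using integrable_Y0 integrable_trunc_max' integrable_I by auto
    show "AE \<omega> in M. trunc_max (Suc n) \<omega> \<le> Y 0 \<omega> + trunc_max' n \<omega> + real m * ?I \<omega>"
      using AE_Y_ge
    proof (rule AE_mp, intro AE_I2 impI)
      fix \<omega> assume \<omega>: "\<omega> \<in> space M" and "\<forall>i. - real m \<le> Y i \<omega>"
      then have "- real m \<le> Y 0 \<omega>"
        by blast
      moreover have "0 \<le> trunc_max' n \<omega>"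
        by (simp add: trunc_max'_def)
      ultimately show "trunc_max (Suc n) \<omega> \<le> Y 0 \<omega> + trunc_max' n \<omega> + real m * ?I \<omega>"
        using \<omega> by (auto simp: trunc_max_Suc indicator_def)
    qed
  qed (rule integrable_trunc_max)
  also have "\<dots> = integral\<^sup>L M (Y 0) + integral\<^sup>L M (trunc_max n) + real m * prob {\<omega>\<in>space M. trunc_max n \<omega> \<le> real m}"
    using integrable_Y0 integrable_trunc_max' integrable_I by (simp add: integral_trunc_max' prob_trunc_max'_le)
  finally show ?thesis
    by (simp add: integral_Y0)
qed

definition W :: "'a \<Rightarrow> ereal" where
  "W \<omega> = sup_psum (\<lambda>i. Y i \<omega>)"

definition W' :: "'a \<Rightarrow> ereal" where
  "W' \<omega> = sup_psum (\<lambda>i. Y (Suc i) \<omega>)"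

lemma walk_sup_eq_W: "walk_sup X \<theta> c = W"
  by (simp add: fun_eq_iff walk_sup_def W_def sup_psum_def Y_def)

lemma measurable_W[measurable]: "W \<in> borel_measurable M"
  using measurable_comp[OF measurable_Y_seq measurable_sup_psum] by (simp add: comp_def W_def[abs_def])

lemma measurable_W'[measurable]: "W' \<in> borel_measurable M"
  using measurable_comp[OF measurable_shifted_Y_seq measurable_sup_psum] by (simp add: comp_def W'_def[abs_def])

lemma W_Lindley: "W \<omega> = ereal (Y 0 \<omega>) + max 0 (W' \<omega>)"
  unfolding W_def W'_def by (rule sup_psum_Lindley)

lemma distr_W': "distr M borel W' = distr M borel W"
  using distr_shifted_increments[OF measurable_sup_psum] by (simp add: W_def[abs_def] W'_def[abs_def])

lemma net_profit_le_prob_W_le: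
  "(c * integral\<^sup>L M (\<theta> 0) - integral\<^sup>L M (X 0)) / real m \<le> prob {\<omega>\<in>space M. W \<omega> \<le> ereal (real m)}"
proof -
  have "{\<omega>\<in>space M. W \<omega> \<le> ereal (real m)} = (\<Inter>n. {\<omega>\<in>space M. trunc_max n \<omega> \<le> real m})"
    by (auto simp: W_def sup_psum_le_iff trunc_max_def)
  moreover have "decseq (\<lambda>n. {\<omega>\<in>space M. trunc_max n \<omega> \<le> real m})"
    by (rule decseq_SucI) (auto intro: order_trans[OF trunc_max_mono])
  then have "(\<lambda>n. prob {\<omega>\<in>space M. trunc_max n \<omega> \<le> real m}) \<longlonglongrightarrow> prob (\<Inter>n. {\<omega>\<in>space M. trunc_max n \<omega> \<le> real m})"
    by (intro finite_Lim_measure_decseq) auto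
  moreover have "(c * integral\<^sup>L M (\<theta> 0) - integral\<^sup>L M (X 0)) / real m \<le> prob {\<omega>\<in>space M. trunc_max n \<omega> \<le> real m}" for n
    using net_profit_le_prob_trunc_max[of n] m_pos by (simp add: divide_le_eq mult.commute)
  ultimately show ?thesis
    by (metis (lifting) LIMSEQ_le_const)
qed

definition step_coords :: "nat \<Rightarrow> (nat + nat) set" where
  "step_coords i = {Inl i, Inr i}"

definition step :: "nat \<Rightarrow> 'a \<Rightarrow> (nat + nat \<Rightarrow> real)" where
  "step i \<omega> = restrict (\<lambda>k. coord k \<omega>) (step_coords i)"

definition step_sigma :: "nat \<Rightarrow> 'a set set" where
  "step_sigma i = sigma_sets (space M)
    {step i -` B \<inter> space M | B. B \<in> sets (PiM (step_coords i) (\<lambda>_. borel :: real measure))}"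

lemma indep_step_sigma: "indep_sets step_sigma UNIV"
proof -
  have "indep_vars (\<lambda>_. borel :: real measure) coord UNIV"
    using indep by (simp add: coord_def[abs_def])
  from indep_vars_restrict[OF this, of UNIV step_coords]
  have "indep_vars (\<lambda>i. PiM (step_coords i) (\<lambda>_. borel :: real measure)) step UNIV"
    by (auto simp: step_def[abs_def] disjoint_family_on_def step_coords_def)
  then show ?thesis
    unfolding indep_vars_def step_sigma_def by simp
qed

lemma sigma_algebra_step_sigma: "sigma_algebra (space M) (step_sigma i)"
  unfolding step_sigma_def by (rule sigma_algebra_sigma_sets) auto

lemma W_finite_in_late_step_sigma:
  "{\<omega>\<in>space M. W \<omega> < \<infinity>} \<in> sigma_sets (space M) (\<Union> (step_sigma ` {n..}))"
proof -
  let ?S = "sigma_sets (space M) (\<Union> (step_sigma ` {n..}))"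
  have step_sigma_Pow: "step_sigma i \<subseteq> Pow (space M)" for i
    unfolding step_sigma_def by (auto dest: sigma_sets_into_sp[rotated])
  then have "?S \<subseteq> Pow (space M)"
    using sigma_sets_into_sp[of "\<Union>(step_sigma`{n..})" "space M"] by blast
  define N where "N = sigma (space M) ?S"
  have space_N: "space N = space M"
    using \<open>?S \<subseteq> Pow (space M)\<close> by (simp add: N_def)
  have sets_N: "sets N = ?S"
    using \<open>?S \<subseteq> Pow (space M)\<close> step_sigma_Pow
    by (simp add: N_def sets_measure_of) (rule sigma_sets_sigma_sets_eq, blast)
  have coord_N: "coord k \<in> borel_measurable N" if "k \<in> step_coords j" "n \<le> j" for k j
  proof (rule measurableI)
    fix B :: "real set" assume B: "B \<in> sets borel"
    have "coord k -` B \<inter> space N = step j -` {f \<in> space (PiM (step_coords j) (\<lambda>_. borel)). f k \<in> B} \<inter> space M"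
      using that by (auto simp: space_N step_def space_PiM)
    moreover have "{f \<in> space (PiM (step_coords j) (\<lambda>_. borel :: real measure)). f k \<in> B} \<in> sets (PiM (step_coords j) (\<lambda>_. borel))"
      using that B by (intro sets_Collect_single) auto
    ultimately have "coord k -` B \<inter> space N \<in> step_sigma j"
      unfolding step_sigma_def by (intro sigma_sets.Basic) blast
    then show "coord k -` B \<inter> space N \<in> sets N"
      using that unfolding sets_N by (auto intro: sigma_sets.Basic)
  qed simp
  have "Y i \<in> borel_measurable N" if "n \<le> i" for i
  proof -
    have [measurable]: "X i \<in> borel_measurable N" "\<theta> i \<in> borel_measurable N"
      using coord_N[of "Inl i" i] coord_N[of "Inr i" i] that by (simp_all add: step_coords_def coord_def)
    show ?thesis
      unfolding Y_def[abs_def] by measurable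
  qed
  then have "(\<lambda>\<omega>. \<lambda>i. Y (n + i) \<omega>) \<in> measurable N (PiM (UNIV::nat set) (\<lambda>_. borel))"
    by (intro measurable_PiM_single') (auto simp: space_PiM)
  from measurable_comp[OF this measurable_sup_psum]
  have "{\<omega>\<in>space N. sup_psum (\<lambda>i. Y (n + i) \<omega>) < \<infinity>} \<in> sets N"
    by (simp add: comp_def)
  moreover have "{\<omega>\<in>space M. W \<omega> < \<infinity>} = {\<omega>\<in>space N. sup_psum (\<lambda>i. Y (n + i) \<omega>) < \<infinity>}"
    unfolding space_N W_def using sup_psum_finite_shift_n[of "\<lambda>i. Y i _" n] by auto
  ultimately show ?thesis
    by (simp add: sets_N)
qed

lemma AE_W_finite: "AE \<omega> in M. W \<omega> < \<infinity>"
proof -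
  have "{\<omega>\<in>space M. W \<omega> < \<infinity>} \<in> tail_events step_sigma"
    unfolding tail_events_def using W_finite_in_late_step_sigma by blast
  then have "prob {\<omega>\<in>space M. W \<omega> < \<infinity>} = 0 \<or> prob {\<omega>\<in>space M. W \<omega> < \<infinity>} = 1"
    by (rule kolmogorov_0_1_law[OF sigma_algebra_step_sigma indep_step_sigma])
  moreover have "prob {\<omega>\<in>space M. W \<omega> \<le> ereal (real m)} \<le> prob {\<omega>\<in>space M. W \<omega> < \<infinity>}"
    by (intro finite_measure_mono) auto
  moreover have "0 < (c * integral\<^sup>L M (\<theta> 0) - integral\<^sup>L M (X 0)) / real m"
    using net_profit m_pos by simp
  ultimately have "prob {\<omega>\<in>space M. W \<omega> < \<infinity>} = 1"
    using net_profit_le_prob_W_le by linarith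
  then show ?thesis
    by (subst (asm) prob_eq_1) auto
qed

text \<open>\<open>N\<close> is \<open>\<M> = max 0 W\<close> as a natural number; on the null set \<open>{W = \<infinity>}\<close> it takes the junk
  value \<open>0\<close>.\<close>
definition N :: "'a \<Rightarrow> nat" where
  "N \<omega> = ereal_floor_nat (W \<omega>)"

definition N' :: "'a \<Rightarrow> nat" where
  "N' \<omega> = ereal_floor_nat (W' \<omega>)"

definition NX :: "'a \<Rightarrow> nat" where
  "NX \<omega> = nat \<lfloor>X 0 \<omega>\<rfloor>"

definition NC :: "'a \<Rightarrow> nat" where
  "NC \<omega> = nat \<lfloor>c * \<theta> 0 \<omega>\<rfloor>"

definition Z :: "'a \<Rightarrow> int" where
  "Z \<omega> = int (NX \<omega>) - int (NC \<omega>)"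

lemma measurable_N[measurable]: "N \<in> measurable M (count_space UNIV)"
  unfolding N_def[abs_def] by measurable

lemma measurable_N'[measurable]: "N' \<in> measurable M (count_space UNIV)"
  unfolding N'_def[abs_def] by measurable

lemma measurable_NX[measurable]: "NX \<in> measurable M (count_space UNIV)"
  unfolding NX_def[abs_def] by measurable

lemma measurable_NC[measurable]: "NC \<in> measurable M (count_space UNIV)"
  unfolding NC_def[abs_def] by measurable

lemma measurable_Z[measurable]: "Z \<in> measurable M (count_space UNIV)"
  unfolding Z_def[abs_def] by measurable

lemma X0_eq_NX: "\<omega> \<in> space M \<Longrightarrow> X 0 \<omega> = real (NX \<omega>)"
  using X_Nats[of \<omega> 0] by (auto simp: NX_def elim!: Nats_cases)

lemma c\<theta>0_eq_NC: "\<omega> \<in> space M \<Longrightarrow> c * \<theta> 0 \<omega> = real (NC \<omega>)"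
  using c\<theta>_Nats[of \<omega> 0] by (auto simp: NC_def elim!: Nats_cases)

lemma Y0_eq_Z: "\<omega> \<in> space M \<Longrightarrow> Y 0 \<omega> = real_of_int (Z \<omega>)"
  by (simp add: Y_def Z_def X0_eq_NX c\<theta>0_eq_NC)

lemma Y0_eq_minus_iff: "\<omega> \<in> space M \<Longrightarrow> Y 0 \<omega> = - real j \<longleftrightarrow> Z \<omega> = - int j"
  using Y0_eq_Z by (metis of_int_eq_iff of_int_minus of_int_of_nat_eq)

lemma AE_Z_ge: "AE \<omega> in M. - int m \<le> Z \<omega>"
  using AE_Y_ge by (rule AE_mp) (auto intro!: AE_I2 simp: Y0_eq_Z dest!: spec[of _ 0])

lemma AE_NC_le: "AE \<omega> in M. NC \<omega> \<le> m"
  using AE_c\<theta>_le by (rule AE_mp) (auto intro!: AE_I2 simp: c\<theta>0_eq_NC dest!: spec[of _ 0])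

lemma max_0_W_eq_N: "\<omega> \<in> space M \<Longrightarrow> W \<omega> < \<infinity> \<Longrightarrow> max 0 (W \<omega>) = ereal (real (N \<omega>))"
  unfolding N_def W_def by (rule max_0_sup_psum_Ints) (auto intro: Y_Ints)

lemma max_0_W'_eq_N': "\<omega> \<in> space M \<Longrightarrow> W' \<omega> < \<infinity> \<Longrightarrow> max 0 (W' \<omega>) = ereal (real (N' \<omega>))"
  unfolding N'_def W'_def by (rule max_0_sup_psum_Ints) (auto intro: Y_Ints)

lemma AE_N_Lindley: "AE \<omega> in M. N \<omega> = nat (Z \<omega> + int (N' \<omega>))"
  using AE_W_finite
proof (rule AE_mp, intro AE_I2 impI)
  fix \<omega> assume \<omega>: "\<omega> \<in> space M" and finite: "W \<omega> < \<infinity>"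
  then have "W' \<omega> < \<infinity>"
    using sup_psum_finite_shift[of "\<lambda>i. Y i \<omega>"] by (simp add: W_def W'_def)
  have "ereal (real (N \<omega>)) = max 0 (ereal (Y 0 \<omega>) + max 0 (W' \<omega>))"
    using max_0_W_eq_N[OF \<omega> finite] W_Lindley[of \<omega>] by simp
  also have "\<dots> = ereal (max 0 (Y 0 \<omega> + real (N' \<omega>)))"
    using max_0_W'_eq_N'[OF \<omega> \<open>W' \<omega> < \<infinity>\<close>] by (simp add: zero_ereal_def)
  finally have "real (N \<omega>) = max 0 (real_of_int (Z \<omega>) + real (N' \<omega>))"
    using Y0_eq_Z[OF \<omega>] by (simp add: max_def split: if_splits)
  then show "N \<omega> = nat (Z \<omega> + int (N' \<omega>))"
    by linarith
qed

lemma pi_M_eq_prob_N: "pi_M M X \<theta> c i = prob {\<omega>\<in>space M. N \<omega> = i}"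
  unfolding pi_M_def walk_sup_eq_W
proof (rule finite_measure_eq_AE)
  show "AE x in M. (x \<in> {\<omega> \<in> space M. max 0 (W \<omega>) = ereal (real i)}) = (x \<in> {\<omega> \<in> space M. N \<omega> = i})"
    using AE_W_finite by (rule AE_mp) (auto intro!: AE_I2 simp: max_0_W_eq_N)
qed auto

lemma surv_phi_eq_prob_N_le: "surv_phi M X \<theta> c (Suc i) = prob {\<omega>\<in>space M. N \<omega> \<le> i}"
  unfolding surv_phi_def walk_sup_eq_W
proof (rule finite_measure_eq_AE)
  show "AE x in M. (x \<in> {\<omega> \<in> space M. W \<omega> < ereal (real (Suc i))}) = (x \<in> {\<omega> \<in> space M. N \<omega> \<le> i})"
    using AE_W_finite
  proof (rule AE_mp, intro AE_I2 impI)
    fix x assume x: "x \<in> space M" "W x < \<infinity>"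
    have "W x < ereal (real (Suc i)) \<longleftrightarrow> max 0 (W x) < ereal (real (Suc i))"
      by (cases "W x") (auto simp: max_def)
    also have "\<dots> \<longleftrightarrow> real (N x) < real (Suc i)"
      using max_0_W_eq_N[OF x] by simp
    also have "\<dots> \<longleftrightarrow> N x \<le> i"
      by (simp only: of_nat_less_iff less_Suc_eq_le)
    finally show "(x \<in> {\<omega> \<in> space M. W \<omega> < ereal (real (Suc i))}) = (x \<in> {\<omega> \<in> space M. N \<omega> \<le> i})"
      using x by simp
  qed
qed auto

lemma distr_N': "distr M (count_space UNIV) N' = distr M (count_space UNIV) N"
proof -
  have "distr M (count_space UNIV) N' = distr (distr M borel W') (count_space UNIV) ereal_floor_nat"
    by (subst distr_distr) (auto simp: comp_def N'_def[abs_def])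
  also have "\<dots> = distr M (count_space UNIV) N"
    by (subst distr_W', subst distr_distr) (auto simp: comp_def N_def[abs_def])
  finally show ?thesis .
qed

lemma prob_N'_eq: "prob {\<omega>\<in>space M. N' \<omega> = i} = prob {\<omega>\<in>space M. N \<omega> = i}"
  using arg_cong[OF distr_N', of "\<lambda>D. measure D {i}"]
  by (simp add: measure_distr vimage_def Int_def conj_commute)

lemma integral_N':
  fixes g :: "nat \<Rightarrow> complex"
  shows "(\<integral>\<omega>. g (N' \<omega>) \<partial>M) = (\<integral>\<omega>. g (N \<omega>) \<partial>M)"
  using integral_distr[of N' M "count_space UNIV" g] integral_distr[of N M "count_space UNIV" g]
  by (simp add: distr_N')

text \<open>\<open>Y\<^sub>0\<close> depends on the coordinates \<open>Inl 0, Inr 0\<close> and \<open>N'\<close> only on the shifted ones.\<close>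
lemma indep_Y0_N': "indep_var borel (Y 0) borel (\<lambda>\<omega>. real (N' \<omega>))"
proof -
  let ?A = "{Inl 0, Inr 0} :: (nat + nat) set"
  have "indep_vars (\<lambda>_. borel :: real measure) coord UNIV"
    using indep by (simp add: coord_def[abs_def])
  then have "indep_var (PiM ?A (\<lambda>_. borel)) (\<lambda>\<omega>. restrict (\<lambda>k. coord k \<omega>) ?A)
      (PiM (range shift_index) (\<lambda>_. borel)) (\<lambda>\<omega>. restrict (\<lambda>k. coord k \<omega>) (range shift_index))"
    by (rule indep_var_restrict) (auto simp: shift_index_def split: sum.splits)
  moreover have "(\<lambda>f. f (Inl 0) - c * f (Inr 0)) \<in> borel_measurable (PiM ?A (\<lambda>_. borel :: real measure))"
    by measurable
  moreover have "(\<lambda>f. \<lambda>k. f (shift_index k)) \<in> measurable (PiM (range shift_index) (\<lambda>_. borel :: real measure)) coord_space"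
    by (rule measurable_PiM_single') (auto simp: space_PiM)
  from measurable_comp[OF measurable_comp[OF this measurable_increments] measurable_sup_psum]
  have "(\<lambda>f. real (ereal_floor_nat (sup_psum (increments (\<lambda>k. f (shift_index k))))))
      \<in> borel_measurable (PiM (range shift_index) (\<lambda>_. borel :: real measure))"
    unfolding comp_def by measurable
  ultimately have "indep_var
      borel ((\<lambda>f. f (Inl 0) - c * f (Inr 0)) \<circ> (\<lambda>\<omega>. restrict (\<lambda>k. coord k \<omega>) ?A))
      borel ((\<lambda>f. real (ereal_floor_nat (sup_psum (increments (\<lambda>k. f (shift_index k))))))
               \<circ> (\<lambda>\<omega>. restrict (\<lambda>k. coord k \<omega>) (range shift_index)))"
    by (rule indep_var_compose)
  moreover have "(\<lambda>f. f (Inl 0) - c * f (Inr 0)) \<circ> (\<lambda>\<omega>. restrict (\<lambda>k. coord k \<omega>) ?A) = Y 0"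
    by (simp add: comp_def fun_eq_iff coord_def Y_def)
  moreover have "(\<lambda>f. real (ereal_floor_nat (sup_psum (increments (\<lambda>k. f (shift_index k))))))
      \<circ> (\<lambda>\<omega>. restrict (\<lambda>k. coord k \<omega>) (range shift_index)) = (\<lambda>\<omega>. real (N' \<omega>))"
  proof -
    have "(\<lambda>k. restrict (\<lambda>k. coord k \<omega>) (range shift_index) (shift_index k)) = (\<lambda>k. coord (shift_index k) \<omega>)" for \<omega>
      by auto
    then show ?thesis
      by (simp add: comp_def N'_def W'_def increments_shifted_coords)
  qed
  ultimately show ?thesis
    by simp
qed

lemma indep_X0_c\<theta>0: "indep_var borel (X 0) borel (\<lambda>\<omega>. c * \<theta> 0 \<omega>)"
proof -
  have "indep_vars (\<lambda>_. borel :: real measure) coord UNIV"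
    using indep by (simp add: coord_def[abs_def])
  then have "indep_var (PiM {Inl 0} (\<lambda>_. borel)) (\<lambda>\<omega>. restrict (\<lambda>k. coord k \<omega>) {Inl 0})
      (PiM {Inr 0} (\<lambda>_. borel)) (\<lambda>\<omega>. restrict (\<lambda>k. coord k \<omega>) {Inr 0})"
    by (rule indep_var_restrict) auto
  moreover have "(\<lambda>f. f (Inl 0)) \<in> borel_measurable (PiM {Inl 0} (\<lambda>_. borel :: real measure))"
    "(\<lambda>f. c * f (Inr 0)) \<in> borel_measurable (PiM {Inr 0} (\<lambda>_. borel :: real measure))"
    by measurable
  ultimately have "indep_var borel ((\<lambda>f. f (Inl 0)) \<circ> (\<lambda>\<omega>. restrict (\<lambda>k. coord k \<omega>) {Inl 0}))
      borel ((\<lambda>f. c * f (Inr 0)) \<circ> (\<lambda>\<omega>. restrict (\<lambda>k. coord k \<omega>) {Inr 0}))"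
    by (intro indep_var_compose)
  then show ?thesis
    by (simp add: comp_def coord_def)
qed

subsection \<open>The generating function identity\<close>

lemma pgf_X0_eq_integral: "norm s \<le> 1 \<Longrightarrow> pgf M (X 0) s = (\<integral>\<omega>. s ^ NX \<omega> \<partial>M)"
  unfolding pgf_def
proof (rule sums_unique[symmetric])
  assume "norm s \<le> 1"
  moreover have "{\<omega> \<in> space M. X 0 \<omega> = real k} = {\<omega> \<in> space M. NX \<omega> = k}" for k
    by (auto simp: X0_eq_NX)
  ultimately show "(\<lambda>k. complex_of_real (prob {\<omega> \<in> space M. X 0 \<omega> = real k}) * s ^ k) sums (\<integral>\<omega>. s ^ NX \<omega> \<partial>M)"
    using pgf_sums_integral_norm_le_1[OF measurable_NX] by simp
qed

lemma pgf_c\<theta>0_eq_integral: "pgf M (\<lambda>\<omega>. c * \<theta> 0 \<omega>) t = (\<integral>\<omega>. t ^ NC \<omega> \<partial>M)"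
  unfolding pgf_def
proof (rule sums_unique[symmetric])
  have "{\<omega> \<in> space M. c * \<theta> 0 \<omega> = real k} = {\<omega> \<in> space M. NC \<omega> = k}" for k
    by (auto simp: c\<theta>0_eq_NC)
  then show "(\<lambda>k. complex_of_real (prob {\<omega> \<in> space M. c * \<theta> 0 \<omega> = real k}) * t ^ k) sums (\<integral>\<omega>. t ^ NC \<omega> \<partial>M)"
    using pgf_sums_integral_AE_bounded[OF measurable_NC AE_NC_le] by simp
qed

lemma pgf_M_eq_integral: "norm s \<le> 1 \<Longrightarrow> pgf_M M X \<theta> c s = (\<integral>\<omega>. s ^ N \<omega> \<partial>M)"
  unfolding pgf_M_def pi_M_eq_prob_N using pgf_sums_integral_norm_le_1[OF measurable_N]
  by (simp add: sums_iff)

lemma integrable_power_NC: "integrable M (\<lambda>\<omega>. t ^ NC \<omega>)" for t :: complex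
proof (rule Bochner_Integration.integrable_bound[where f="\<lambda>_. max 1 (norm t) ^ m"])
  show "AE x in M. norm (t ^ NC x) \<le> norm (max 1 (norm t) ^ m)"
    using AE_NC_le
  proof (rule AE_mp, intro AE_I2 impI)
    fix x assume "NC x \<le> m"
    have "norm (t ^ NC x) \<le> max 1 (norm t) ^ NC x"
      by (simp add: norm_power power_mono)
    also have "\<dots> \<le> max 1 (norm t) ^ m"
      using \<open>NC x \<le> m\<close> by (intro power_increasing) auto
    finally show "norm (t ^ NC x) \<le> norm (max 1 (norm t) ^ m)"
      by simp
  qed
qed auto

lemma integrable_power_int_Z:
  fixes s :: "'b::{real_normed_field, banach, second_countable_topology}"
  assumes s: "s \<noteq> 0" "norm s \<le> 1"
  shows "integrable M (\<lambda>\<omega>. s powi Z \<omega>)"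
proof (rule Bochner_Integration.integrable_bound[where f="\<lambda>_. (1 / norm s) ^ m"])
  show "AE x in M. norm (s powi Z x) \<le> norm ((1 / norm s) ^ m)"
    using AE_Z_ge by (rule AE_mp)
      (use s in \<open>auto intro!: AE_I2 simp: norm_power_int intro: power_int_le_inverse_power\<close>)
qed auto

lemma pgf_diff_eq_integral:
  assumes s: "s \<noteq> 0" "norm s \<le> 1"
  shows "pgf_diff M (X 0) (\<lambda>\<omega>. c * \<theta> 0 \<omega>) s = (\<integral>\<omega>. s powi Z \<omega> \<partial>M)"
proof -
  have "(\<lambda>x::real. s ^ nat \<lfloor>x\<rfloor>) \<in> borel_measurable borel" "(\<lambda>x::real. (1/s) ^ nat \<lfloor>x\<rfloor>) \<in> borel_measurable borel"
    by measurable
  with indep_X0_c\<theta>0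
  have "indep_var borel ((\<lambda>x::real. s ^ nat \<lfloor>x\<rfloor>) \<circ> X 0) borel ((\<lambda>x::real. (1/s) ^ nat \<lfloor>x\<rfloor>) \<circ> (\<lambda>\<omega>. c * \<theta> 0 \<omega>))"
    by (intro indep_var_compose)
  then have indep_powers: "indep_var borel (\<lambda>\<omega>. s ^ NX \<omega>) borel (\<lambda>\<omega>. (1/s) ^ NC \<omega>)"
    by (simp add: comp_def NX_def[abs_def] NC_def[abs_def])
  have "pgf_diff M (X 0) (\<lambda>\<omega>. c * \<theta> 0 \<omega>) s = (\<integral>\<omega>. s ^ NX \<omega> \<partial>M) * (\<integral>\<omega>. (1/s) ^ NC \<omega> \<partial>M)"
    unfolding pgf_diff_def using pgf_X0_eq_integral[OF s(2)] pgf_c\<theta>0_eq_integral by simp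
  also have "\<dots> = (\<integral>\<omega>. s ^ NX \<omega> * (1/s) ^ NC \<omega> \<partial>M)"
    by (rule indep_var_lebesgue_integral[OF indep_powers, symmetric])
       (auto intro: integrable_power_norm_le_1[OF measurable_NX s(2)] integrable_power_NC)
  also have "\<dots> = (\<integral>\<omega>. s powi Z \<omega> \<partial>M)"
    using s by (intro Bochner_Integration.integral_cong refl)
      (simp add: Z_def power_int_diff power_divide divide_inverse power_inverse)
  finally show ?thesis .
qed

definition joint_event :: "nat \<Rightarrow> nat \<Rightarrow> 'a set" where
  "joint_event i j = {\<omega>\<in>space M. Y 0 \<omega> \<in> {- real j} \<and> real (N' \<omega>) \<in> {real i}}"

lemma sets_joint_event[measurable]: "joint_event i j \<in> sets M"
  unfolding joint_event_def by measurable

lemma prob_joint_event: "prob (joint_event i j) = f_pmf M (X 0) (\<theta> 0) c (- int j) * pi_M M X \<theta> c i"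
proof -
  have "prob (joint_event i j) = \<P>(x in M. Y 0 x \<in> {- real j}) * \<P>(x in M. real (N' x) \<in> {real i})"
    unfolding joint_event_def by (rule prob_indep_random_variable[OF indep_Y0_N']) auto
  also have "\<P>(x in M. Y 0 x \<in> {- real j}) = f_pmf M (X 0) (\<theta> 0) c (- int j)"
    by (simp add: f_pmf_def Y_def)
  also have "\<P>(x in M. real (N' x) \<in> {real i}) = pi_M M X \<theta> c i"
    by (simp add: pi_M_eq_prob_N prob_N'_eq[symmetric])
  finally show ?thesis .
qed

lemma AE_power_N_eq:
  fixes s :: complex
  assumes "s \<noteq> 0"
  shows "AE \<omega> in M. s ^ N \<omega> = s powi Z \<omega> * s ^ N' \<omega> +
      (\<Sum>i<m. \<Sum>j\<in>{i+1..m}. complex_of_real (indicator (joint_event i j) \<omega>) * (1 - s powi (int i - int j)))"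
  using AE_Z_ge AE_N_Lindley
proof (rule AE_mp[OF AE_conjI], intro AE_I2 impI, elim conjE)
  fix \<omega> assume \<omega>: "\<omega> \<in> space M" and Z_ge: "- int m \<le> Z \<omega>" and N_eq: "N \<omega> = nat (Z \<omega> + int (N' \<omega>))"
  have indicator_eq: "indicator (joint_event i j) \<omega> = (if N' \<omega> = i \<and> Z \<omega> = - int j then 1 else (0::real))" for i j
    using \<omega> Y0_eq_minus_iff[OF \<omega>] by (auto simp: joint_event_def indicator_def)
  define t where "t = Z \<omega> + int (N' \<omega>)"
  have "(\<Sum>i<m. \<Sum>j\<in>{i+1..m}. complex_of_real (indicator (joint_event i j) \<omega>) * (1 - s powi (int i - int j)))
      = (\<Sum>i<m. \<Sum>j\<in>{i+1..m}. (if N' \<omega> = i \<and> Z \<omega> = - int j then 1 else 0) * (1 - s powi (int i - int j)))"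
    by (simp add: indicator_eq if_distrib[of complex_of_real] cong: if_cong)
  also have "\<dots> = (if t < 0 then 1 - s powi t else 0)"
    unfolding t_def by (rule sum_truncation_indicator[OF Z_ge])
  finally have trunc: "(\<Sum>i<m. \<Sum>j\<in>{i+1..m}. complex_of_real (indicator (joint_event i j) \<omega>) * (1 - s powi (int i - int j)))
      = (if t < 0 then 1 - s powi t else 0)" .
  have "s powi Z \<omega> * s ^ N' \<omega> = s powi t"
    using assms by (simp add: t_def power_int_add)
  moreover have "s ^ N \<omega> = (if t < 0 then 1 else s powi t)"
    using N_eq by (auto simp: t_def power_int_def)
  ultimately show "s ^ N \<omega> = s powi Z \<omega> * s ^ N' \<omega> +
      (\<Sum>i<m. \<Sum>j\<in>{i+1..m}. complex_of_real (indicator (joint_event i j) \<omega>) * (1 - s powi (int i - int j)))"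
    unfolding trunc by simp
qed

lemma integrable_power_Z_mult_N':
  fixes s :: complex
  assumes s: "s \<noteq> 0" "norm s \<le> 1"
  shows "integrable M (\<lambda>\<omega>. s powi Z \<omega> * s ^ N' \<omega>)"
proof (rule Bochner_Integration.integrable_bound[where f="\<lambda>_. (1 / norm s) ^ m"])
  show "AE x in M. norm (s powi Z x * s ^ N' x) \<le> norm ((1 / norm s) ^ m)"
    using AE_Z_ge
  proof (rule AE_mp, intro AE_I2 impI)
    fix x assume "- int m \<le> Z x"
    then have "norm s powi Z x \<le> (1 / norm s) ^ m"
      using s by (intro power_int_le_inverse_power) auto
    moreover have "norm s ^ N' x \<le> 1"
      using s by (simp add: power_le_one)
    ultimately have "norm s powi Z x * norm s ^ N' x \<le> (1 / norm s) ^ m * 1"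
      by (intro mult_mono) auto
    then show "norm (s powi Z x * s ^ N' x) \<le> norm ((1 / norm s) ^ m)"
      by (simp add: norm_mult norm_power_int norm_power)
  qed
qed auto

lemma integral_power_Z_mult_N':
  fixes s :: complex
  assumes s: "s \<noteq> 0" "norm s \<le> 1"
  shows "(\<integral>\<omega>. s powi Z \<omega> * s ^ N' \<omega> \<partial>M) = pgf_diff M (X 0) (\<lambda>\<omega>. c * \<theta> 0 \<omega>) s * pgf_M M X \<theta> c s"
proof -
  let ?f = "\<lambda>y::real. s powi \<lfloor>y\<rfloor>" and ?g = "\<lambda>r::real. s ^ nat \<lfloor>r\<rfloor>"
  have "?f \<in> borel_measurable borel" "?g \<in> borel_measurable borel"
    by measurable
  with indep_Y0_N' have indep_fg: "indep_var borel (?f \<circ> Y 0) borel (?g \<circ> (\<lambda>\<omega>. real (N' \<omega>)))"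
    by (intro indep_var_compose)
  have f_Y0: "(?f \<circ> Y 0) \<omega> = s powi Z \<omega>" if "\<omega> \<in> space M" for \<omega>
    using Y0_eq_Z[OF that] by simp
  have g_N': "(?g \<circ> (\<lambda>\<omega>. real (N' \<omega>))) = (\<lambda>\<omega>. s ^ N' \<omega>)"
    by (simp add: comp_def)
  have integrable_f: "integrable M (?f \<circ> Y 0)"
  proof -
    have "integrable M (?f \<circ> Y 0) \<longleftrightarrow> integrable M (\<lambda>\<omega>. s powi Z \<omega>)"
      by (rule Bochner_Integration.integrable_cong) (auto simp: Y0_eq_Z)
    then show ?thesis
      using integrable_power_int_Z[OF s] by simp
  qed
  have integrable_g: "integrable M (?g \<circ> (\<lambda>\<omega>. real (N' \<omega>)))"
    unfolding g_N' using integrable_power_norm_le_1[OF measurable_N' s(2)] .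
  have "(\<integral>\<omega>. s powi Z \<omega> * s ^ N' \<omega> \<partial>M) = (\<integral>\<omega>. (?f \<circ> Y 0) \<omega> * (?g \<circ> (\<lambda>\<omega>. real (N' \<omega>))) \<omega> \<partial>M)"
    by (intro Bochner_Integration.integral_cong refl) (simp only: f_Y0 g_N')
  also have "\<dots> = (\<integral>\<omega>. (?f \<circ> Y 0) \<omega> \<partial>M) * (\<integral>\<omega>. (?g \<circ> (\<lambda>\<omega>. real (N' \<omega>))) \<omega> \<partial>M)"
    by (rule indep_var_lebesgue_integral[OF indep_fg integrable_f integrable_g])
  also have "(\<integral>\<omega>. (?f \<circ> Y 0) \<omega> \<partial>M) = pgf_diff M (X 0) (\<lambda>\<omega>. c * \<theta> 0 \<omega>) s"
    unfolding pgf_diff_eq_integral[OF s] by (intro Bochner_Integration.integral_cong refl) (simp only: f_Y0)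
  also have "(\<integral>\<omega>. (?g \<circ> (\<lambda>\<omega>. real (N' \<omega>))) \<omega> \<partial>M) = pgf_M M X \<theta> c s"
    unfolding g_N' pgf_M_eq_integral[OF s(2)] by (rule integral_N')
  finally show ?thesis .
qed

lemma pgf_identity:
  fixes s :: complex
  assumes s: "s \<noteq> 0" "norm s \<le> 1"
  shows "(\<Sum>i<m. complex_of_real (pi_M M X \<theta> c i) *
            (\<Sum>j\<in>{i+1..m}. (1 - s powi (int i - int j)) * complex_of_real (f_pmf M (X 0) (\<theta> 0) c (- int j))))
        = pgf_M M X \<theta> c s * (1 - pgf_diff M (X 0) (\<lambda>\<omega>. c * \<theta> 0 \<omega>) s)"
proof -
  let ?trunc = "\<lambda>i j \<omega>. complex_of_real (indicator (joint_event i j) \<omega>) * (1 - s powi (int i - int j))"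
  have integrable_trunc: "integrable M (?trunc i j)" for i j
    by (rule Bochner_Integration.integrable_bound[where f="\<lambda>_. norm (1 - s powi (int i - int j))"])
       (auto simp: indicator_def norm_mult)
  have integral_trunc: "integral\<^sup>L M (?trunc i j) = complex_of_real (prob (joint_event i j)) * (1 - s powi (int i - int j))"
    for i j
    by (simp add: Int_absorb2)
  have "pgf_M M X \<theta> c s = (\<integral>\<omega>. s powi Z \<omega> * s ^ N' \<omega> + (\<Sum>i<m. \<Sum>j\<in>{i+1..m}. ?trunc i j \<omega>) \<partial>M)"
    unfolding pgf_M_eq_integral[OF s(2)] by (rule integral_cong_AE) (use AE_power_N_eq[OF s(1)] in auto)
  also have "\<dots> = (\<integral>\<omega>. s powi Z \<omega> * s ^ N' \<omega> \<partial>M) + (\<integral>\<omega>. (\<Sum>i<m. \<Sum>j\<in>{i+1..m}. ?trunc i j \<omega>) \<partial>M)"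
    using integrable_power_Z_mult_N'[OF s] integrable_trunc by (intro Bochner_Integration.integral_add) auto
  also have "(\<integral>\<omega>. (\<Sum>i<m. \<Sum>j\<in>{i+1..m}. ?trunc i j \<omega>) \<partial>M) =
      (\<Sum>i<m. \<Sum>j\<in>{i+1..m}. complex_of_real (prob (joint_event i j)) * (1 - s powi (int i - int j)))"
    using integrable_trunc by (simp add: integral_sum integral_trunc del: of_real_mult)
  also have "\<dots> = (\<Sum>i<m. complex_of_real (pi_M M X \<theta> c i) *
          (\<Sum>j\<in>{i+1..m}. (1 - s powi (int i - int j)) * complex_of_real (f_pmf M (X 0) (\<theta> 0) c (- int j))))"
    unfolding sum_distrib_left prob_joint_event
    by (intro sum.cong refl) (simp add: mult_ac)
  finally have "pgf_M M X \<theta> c s = pgf_diff M (X 0) (\<lambda>\<omega>. c * \<theta> 0 \<omega>) s * pgf_M M X \<theta> c s +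
      (\<Sum>i<m. complex_of_real (pi_M M X \<theta> c i) *
          (\<Sum>j\<in>{i+1..m}. (1 - s powi (int i - int j)) * complex_of_real (f_pmf M (X 0) (\<theta> 0) c (- int j))))"
    unfolding integral_power_Z_mult_N'[OF s] .
  moreover have "r = a * (1 - b)" if "a = b * a + r" for a b r :: complex
    using that by (simp add: algebra_simps)
  ultimately show ?thesis
    by blast
qed

subsection \<open>The generating function of the survival probabilities\<close>

lemma Xi_eq_pgf_M_div:
  assumes s: "norm s < 1"
  shows "Xi M X \<theta> c s = pgf_M M X \<theta> c s / (1 - s)"
proof -
  let ?a = "\<lambda>k. complex_of_real (pi_M M X \<theta> c k) * s ^ k"
  have summable_a: "summable (\<lambda>k. norm (?a k))"
  proof (rule summable_comparison_test'[OF summable_geometric[of "norm s"]])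
    fix n
    have "0 \<le> pi_M M X \<theta> c n" "pi_M M X \<theta> c n \<le> 1"
      by (simp_all add: pi_M_def)
    then show "norm (norm (?a n)) \<le> norm s ^ n"
      by (simp add: norm_mult norm_power mult_left_le_one_le)
  qed (use s in simp)
  have summable_geom: "summable (\<lambda>k. norm (s ^ k))"
    using s by (simp add: norm_power summable_geometric)
  have "pgf_M M X \<theta> c s * (1 / (1 - s)) = (\<Sum>k. ?a k) * (\<Sum>k. s ^ k)"
    using s by (simp add: pgf_M_def suminf_geometric)
  also have "\<dots> = (\<Sum>k. \<Sum>i\<le>k. ?a i * s ^ (k - i))"
    by (rule Cauchy_product[OF summable_a summable_geom])
  also have "\<dots> = Xi M X \<theta> c s"
    unfolding Xi_def
  proof (intro suminf_cong)
    fix k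
    have "prob {\<omega>\<in>space M. N \<omega> \<le> k} = (\<Sum>i\<le>k. prob {\<omega>\<in>space M. N \<omega> = i})"
    proof -
      have "{\<omega>\<in>space M. N \<omega> \<le> k} = (\<Union>i\<in>{..k}. {\<omega>\<in>space M. N \<omega> = i})"
        by auto
      moreover have "prob (\<Union>i\<in>{..k}. {\<omega>\<in>space M. N \<omega> = i}) = (\<Sum>i\<le>k. prob {\<omega>\<in>space M. N \<omega> = i})"
        by (rule finite_measure_finite_Union) (auto simp: disjoint_family_on_def)
      ultimately show ?thesis
        by simp
    qed
    then have "surv_phi M X \<theta> c (k + 1) = (\<Sum>i\<le>k. pi_M M X \<theta> c i)"
      by (simp add: surv_phi_eq_prob_N_le pi_M_eq_prob_N)
    moreover have "(\<Sum>i\<le>k. ?a i * s ^ (k - i)) = (\<Sum>i\<le>k. complex_of_real (pi_M M X \<theta> c i)) * s ^ k"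
      unfolding sum_distrib_right
      by (intro sum.cong refl) (simp add: mult.assoc power_add[symmetric])
    ultimately show "(\<Sum>i\<le>k. ?a i * s ^ (k - i)) = complex_of_real (surv_phi M X \<theta> c (k + 1)) * s ^ k"
      by simp
  qed
  finally show ?thesis
    by simp
qed

lemma F_cdf_eq_sum_f_pmf:
  assumes j: "j \<le> m"
  shows "F_cdf M (X 0) (\<theta> 0) c (- int m + int j) = (\<Sum>l\<in>{m-j..m}. f_pmf M (X 0) (\<theta> 0) c (- int l))"
proof -
  have "F_cdf M (X 0) (\<theta> 0) c (- int m + int j) = prob (\<Union>l\<in>{m-j..m}. {\<omega>\<in>space M. Y 0 \<omega> = - real l})"
    unfolding F_cdf_def
  proof (rule finite_measure_eq_AE)
    show "AE x in M. (x \<in> {\<omega> \<in> space M. X 0 \<omega> - c * \<theta> 0 \<omega> \<le> real_of_int (- int m + int j)}) =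
        (x \<in> (\<Union>l\<in>{m - j..m}. {\<omega> \<in> space M. Y 0 \<omega> = - real l}))"
      using AE_Z_ge
    proof (rule AE_mp, intro AE_I2 impI)
      fix x assume x: "x \<in> space M" and Z_ge: "- int m \<le> Z x"
      have "Z x \<le> - int m + int j \<longleftrightarrow> (\<exists>l\<in>{m-j..m}. Z x = - int l)"
      proof
        assume "Z x \<le> - int m + int j"
        then show "\<exists>l\<in>{m-j..m}. Z x = - int l"
          using Z_ge j by (intro bexI[of _ "nat (- Z x)"]) auto
      qed (use j in auto)
      moreover have "X 0 x - c * \<theta> 0 x = real_of_int (Z x)"
        using Y0_eq_Z[OF x] by (simp add: Y_def)
      ultimately show "(x \<in> {\<omega> \<in> space M. X 0 \<omega> - c * \<theta> 0 \<omega> \<le> real_of_int (- int m + int j)}) =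
          (x \<in> (\<Union>l\<in>{m - j..m}. {\<omega> \<in> space M. Y 0 \<omega> = - real l}))"
        using x Y0_eq_minus_iff[OF x] by (simp only: mem_Collect_eq of_int_le_iff) auto
    qed
  qed auto
  also have "\<dots> = (\<Sum>l\<in>{m-j..m}. prob {\<omega>\<in>space M. Y 0 \<omega> = - real l})"
    by (rule finite_measure_finite_Union) (auto simp: disjoint_family_on_def)
  also have "\<dots> = (\<Sum>l\<in>{m-j..m}. f_pmf M (X 0) (\<theta> 0) c (- int l))"
    by (simp add: f_pmf_def Y_def)
  finally show ?thesis .
qed

lemma pgf_identity_cdf_form:
  fixes s :: complex
  assumes s: "s \<noteq> 0" "norm s \<le> 1"
  shows "s ^ m * (pgf_M M X \<theta> c s * (1 - pgf_diff M (X 0) (\<lambda>\<omega>. c * \<theta> 0 \<omega>) s)) =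
      (s - 1) * (\<Sum>i<m. complex_of_real (pi_M M X \<theta> c i) *
        (\<Sum>j\<in>{0..m-i-1}. s ^ (j + i) * complex_of_real (F_cdf M (X 0) (\<theta> 0) c (- int m + int j))))"
proof -
  let ?f = "\<lambda>j. complex_of_real (f_pmf M (X 0) (\<theta> 0) c (- int j))"
  have "s ^ m * (pgf_M M X \<theta> c s * (1 - pgf_diff M (X 0) (\<lambda>\<omega>. c * \<theta> 0 \<omega>) s)) =
      s ^ m * (\<Sum>i<m. complex_of_real (pi_M M X \<theta> c i) * (\<Sum>j\<in>{i+1..m}. (1 - s powi (int i - int j)) * ?f j))"
    using pgf_identity[OF s] by simp
  also have "\<dots> = (\<Sum>i<m. complex_of_real (pi_M M X \<theta> c i) * (s ^ m * (\<Sum>j\<in>{i+1..m}. (1 - s powi (int i - int j)) * ?f j)))"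
    by (simp only: sum_distrib_left[of "s ^ m" _ "{..<m}"] mult.left_commute)
  also have "\<dots> = (\<Sum>i<m. complex_of_real (pi_M M X \<theta> c i) *
      ((s - 1) * (\<Sum>j\<in>{0..m-i-1}. s ^ (j + i) * (\<Sum>l\<in>{m-j..m}. ?f l))))"
    by (intro sum.cong refl arg_cong2[where f="(*)"] truncation_sum_reindex s) auto
  also have "\<dots> = (s - 1) * (\<Sum>i<m. complex_of_real (pi_M M X \<theta> c i) *
      (\<Sum>j\<in>{0..m-i-1}. s ^ (j + i) * complex_of_real (F_cdf M (X 0) (\<theta> 0) c (- int m + int j))))"
    unfolding sum_distrib_left[of "s - 1" _ "{..<m}"]
  proof (intro sum.cong refl)
    fix i
    have "(\<Sum>j\<in>{0..m-i-1}. s ^ (j + i) * (\<Sum>l\<in>{m-j..m}. ?f l)) =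
        (\<Sum>j\<in>{0..m-i-1}. s ^ (j + i) * complex_of_real (F_cdf M (X 0) (\<theta> 0) c (- int m + int j)))"
    proof (intro sum.cong refl)
      fix j assume "j \<in> {0..m-i-1}"
      then have "j \<le> m"
        by simp
      then show "s ^ (j + i) * (\<Sum>l\<in>{m-j..m}. ?f l) =
          s ^ (j + i) * complex_of_real (F_cdf M (X 0) (\<theta> 0) c (- int m + int j))"
        using F_cdf_eq_sum_f_pmf[of j] by simp
    qed
    then show "complex_of_real (pi_M M X \<theta> c i) * ((s - 1) * (\<Sum>j\<in>{0..m-i-1}. s ^ (j + i) * (\<Sum>l\<in>{m-j..m}. ?f l))) =
        (s - 1) * (complex_of_real (pi_M M X \<theta> c i) *
          (\<Sum>j\<in>{0..m-i-1}. s ^ (j + i) * complex_of_real (F_cdf M (X 0) (\<theta> 0) c (- int m + int j))))"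
      by (simp only: mult.left_commute)
  qed
  finally show ?thesis .
qed

lemma Xi_formula:
  fixes s :: complex
  assumes s: "norm s < 1" and nonzero: "s ^ m * (1 - pgf_diff M (X 0) (\<lambda>\<omega>. c * \<theta> 0 \<omega>) s) \<noteq> 0"
  shows "Xi M X \<theta> c s =
          1 / (s ^ m * (pgf_diff M (X 0) (\<lambda>\<omega>. c * \<theta> 0 \<omega>) s - 1)) *
          (\<Sum>i<m. complex_of_real (pi_M M X \<theta> c i) *
            (\<Sum>j\<in>{0..m-i-1}. s ^ (j + i) * complex_of_real (F_cdf M (X 0) (\<theta> 0) c (- int m + int j))))"
    (is "_ = 1 / (s ^ m * (?D - 1)) * ?T")
proof -
  have "s ^ m \<noteq> 0" "?D \<noteq> 1"
    using nonzero by auto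
  then have "s \<noteq> 0"
    using m_pos by (auto simp: power_0_left)
  have "s \<noteq> 1"
    using s by auto
  have "?T = s ^ m * (pgf_M M X \<theta> c s * (1 - ?D)) / (s - 1)"
    using pgf_identity_cdf_form[OF \<open>s \<noteq> 0\<close>] s \<open>s \<noteq> 1\<close> by (simp add: eq_divide_eq mult.commute)
  then show ?thesis
    using \<open>s ^ m \<noteq> 0\<close> \<open>?D \<noteq> 1\<close> \<open>s \<noteq> 1\<close> unfolding Xi_eq_pgf_M_div[OF s]
    by (simp add: field_simps)
qed

subsection \<open>The mean identity\<close>

lemma pgf_identity_real:
  fixes s :: real
  assumes s: "0 < s" "s \<le> 1"
  shows "(\<Sum>i<m. pi_M M X \<theta> c i * (\<Sum>j\<in>{i+1..m}. (1 - s powi (int i - int j)) * f_pmf M (X 0) (\<theta> 0) c (- int j)))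
     = (\<integral>\<omega>. s ^ N \<omega> \<partial>M) * (1 - (\<integral>\<omega>. s powi Z \<omega> \<partial>M))"
proof -
  have cs: "complex_of_real s \<noteq> 0" "norm (complex_of_real s) \<le> 1"
    using s by auto
  have "pgf_M M X \<theta> c (complex_of_real s) = complex_of_real (\<integral>\<omega>. s ^ N \<omega> \<partial>M)"
    using pgf_M_eq_integral[OF cs(2)] integral_complex_of_real[of M "\<lambda>\<omega>. s ^ N \<omega>"] by simp
  moreover have "pgf_diff M (X 0) (\<lambda>\<omega>. c * \<theta> 0 \<omega>) (complex_of_real s) = complex_of_real (\<integral>\<omega>. s powi Z \<omega> \<partial>M)"
    using pgf_diff_eq_integral[OF cs] integral_complex_of_real[of M "\<lambda>\<omega>. s powi Z \<omega>"] by simp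
  ultimately have "complex_of_real (\<Sum>i<m. pi_M M X \<theta> c i *
        (\<Sum>j\<in>{i+1..m}. (1 - s powi (int i - int j)) * f_pmf M (X 0) (\<theta> 0) c (- int j)))
      = complex_of_real ((\<integral>\<omega>. s ^ N \<omega> \<partial>M) * (1 - (\<integral>\<omega>. s powi Z \<omega> \<partial>M)))"
    using pgf_identity[OF cs]
    by (simp only: of_real_sum of_real_mult of_real_diff of_real_1 of_real_power_int)
  then show ?thesis
    by (simp only: of_real_eq_iff)
qed

lemma integral_power_N_tendsto_1:
  fixes sq :: "nat \<Rightarrow> real"
  assumes "sq \<longlonglongrightarrow> 1" and "\<And>n. 0 \<le> sq n" "\<And>n. sq n \<le> 1"
  shows "(\<lambda>n. \<integral>\<omega>. sq n ^ N \<omega> \<partial>M) \<longlonglongrightarrow> 1"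
proof -
  have "(\<lambda>n. \<integral>\<omega>. sq n ^ N \<omega> \<partial>M) \<longlonglongrightarrow> (\<integral>\<omega>. 1 \<partial>M)"
  proof (rule integral_dominated_convergence[where w="\<lambda>_. 1"])
    show "AE x in M. (\<lambda>i. sq i ^ N x) \<longlonglongrightarrow> 1"
      using tendsto_power[OF assms(1)] by (auto intro!: AE_I2)
    show "AE x in M. norm (sq i ^ N x) \<le> 1" for i
      using assms(2,3)[of i] by (auto intro!: AE_I2 simp: power_le_one)
  qed auto
  then show ?thesis
    by (simp add: prob_space)
qed

text \<open>The difference quotients \<open>(1 - s\<^sup>Z) / (1 - s)\<close> are dominated by \<open>|Z| + m 2\<^sup>m\<close> for
  \<open>s \<ge> 1/2\<close> since \<open>Z \<ge> -m\<close>, so dominated convergence applies.\<close>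
lemma integral_diff_quot_Z_tendsto:
  assumes sq: "sq \<longlonglongrightarrow> 1" and sq_bounds: "\<And>n. 1/2 \<le> sq n" "\<And>n. sq n < 1"
  shows "(\<lambda>n. \<integral>\<omega>. diff_quot_power_int (sq n) (Z \<omega>) \<partial>M) \<longlonglongrightarrow> integral\<^sup>L M (X 0) - c * integral\<^sup>L M (\<theta> 0)"
proof -
  have "integrable M (\<lambda>\<omega>. real_of_int (Z \<omega>)) \<longleftrightarrow> integrable M (Y 0)"
    by (rule Bochner_Integration.integrable_cong) (auto simp: Y0_eq_Z)
  then have integrable_Z: "integrable M (\<lambda>\<omega>. real_of_int (Z \<omega>))"
    unfolding Y_def[abs_def] using integrable_X0 integrable_\<theta>0 by simp
  have "(\<lambda>n. \<integral>\<omega>. diff_quot_power_int (sq n) (Z \<omega>) \<partial>M) \<longlonglongrightarrow> (\<integral>\<omega>. real_of_int (Z \<omega>) \<partial>M)"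
  proof (rule integral_dominated_convergence[where w="\<lambda>\<omega>. \<bar>real_of_int (Z \<omega>)\<bar> + real m * 2 ^ m"])
    show "integrable M (\<lambda>\<omega>. \<bar>real_of_int (Z \<omega>)\<bar> + real m * 2 ^ m)"
      using integrable_Z by auto
    show "AE x in M. (\<lambda>i. diff_quot_power_int (sq i) (Z x)) \<longlonglongrightarrow> real_of_int (Z x)"
      using sq sq_bounds(2) by (intro AE_I2 diff_quot_power_int_tendsto) (auto simp: less_imp_neq)
    show "AE x in M. norm (diff_quot_power_int (sq i) (Z x)) \<le> \<bar>real_of_int (Z x)\<bar> + real m * 2 ^ m" for i
      using AE_Z_ge by (rule AE_mp) (use assms in \<open>auto intro!: AE_I2 abs_diff_quot_power_int_le\<close>)
  qed (auto simp: diff_quot_power_int_def)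
  also have "(\<integral>\<omega>. real_of_int (Z \<omega>) \<partial>M) = integral\<^sup>L M (Y 0)"
    by (rule Bochner_Integration.integral_cong) (auto simp: Y0_eq_Z)
  finally show ?thesis
    by (simp add: integral_Y0)
qed

lemma mean_identity:
  "(\<Sum>i<m. pi_M M X \<theta> c i * (\<Sum>j\<in>{i+1..m}. (real j - real i) * f_pmf M (X 0) (\<theta> 0) c (- int j)))
     = c * integral\<^sup>L M (\<theta> 0) - integral\<^sup>L M (X 0)"
proof -
  define sq where "sq n = 1 - inverse (real (Suc n)) / 2" for n
  have sq_bounds: "1/2 \<le> sq n" "sq n < 1" for n
    using inverse_le_1_iff[of "real (Suc n)"] by (auto simp: sq_def)
  have sq_tendsto: "sq \<longlonglongrightarrow> 1"
    unfolding sq_def[abs_def]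
    using tendsto_diff[OF tendsto_const tendsto_divide[OF LIMSEQ_inverse_real_of_nat tendsto_const[of 2]]]
    by simp
  let ?p = "pi_M M X \<theta> c" and ?f = "\<lambda>j. f_pmf M (X 0) (\<theta> 0) c (- int j)"
  let ?L = "\<Sum>i<m. ?p i * (\<Sum>j\<in>{i+1..m}. real_of_int (int i - int j) * ?f j)"
  have quotient_eq: "(\<Sum>i<m. ?p i * (\<Sum>j\<in>{i+1..m}. diff_quot_power_int (sq n) (int i - int j) * ?f j)) =
      (\<integral>\<omega>. sq n ^ N \<omega> \<partial>M) * (\<integral>\<omega>. diff_quot_power_int (sq n) (Z \<omega>) \<partial>M)" for n
  proof -
    have "integrable M (\<lambda>\<omega>. sq n powi Z \<omega>)"
      using sq_bounds[of n] by (intro integrable_power_int_Z) auto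
    then have "(\<integral>\<omega>. 1 - sq n powi Z \<omega> \<partial>M) = 1 - (\<integral>\<omega>. sq n powi Z \<omega> \<partial>M)"
      by (simp add: prob_space)
    then have "(\<integral>\<omega>. diff_quot_power_int (sq n) (Z \<omega>) \<partial>M) = (1 - (\<integral>\<omega>. sq n powi Z \<omega> \<partial>M)) / (1 - sq n)"
      unfolding diff_quot_power_int_def by (simp only: integral_divide_zero)
    moreover have "(\<Sum>i<m. ?p i * (\<Sum>j\<in>{i+1..m}. diff_quot_power_int (sq n) (int i - int j) * ?f j)) =
        (\<Sum>i<m. ?p i * (\<Sum>j\<in>{i+1..m}. (1 - sq n powi (int i - int j)) * ?f j)) / (1 - sq n)"
      by (simp add: diff_quot_power_int_def sum_divide_distrib sum_distrib_left)
    ultimately show ?thesis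
      using pgf_identity_real[of "sq n"] sq_bounds[of n] by simp
  qed
  have "(\<lambda>n. \<Sum>i<m. ?p i * (\<Sum>j\<in>{i+1..m}. diff_quot_power_int (sq n) (int i - int j) * ?f j)) \<longlonglongrightarrow> ?L"
    using sq_bounds(2) by (intro tendsto_intros diff_quot_power_int_tendsto sq_tendsto) (auto simp: less_imp_neq)
  moreover have "(\<lambda>n. \<Sum>i<m. ?p i * (\<Sum>j\<in>{i+1..m}. diff_quot_power_int (sq n) (int i - int j) * ?f j)) \<longlonglongrightarrow>
      1 * (integral\<^sup>L M (X 0) - c * integral\<^sup>L M (\<theta> 0))"
    unfolding quotient_eq using sq_bounds
    by (intro tendsto_mult integral_power_N_tendsto_1 integral_diff_quot_Z_tendsto sq_tendsto)
       (auto intro: less_imp_le order_trans[of 0 "1/2"])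
  ultimately have "?L = integral\<^sup>L M (X 0) - c * integral\<^sup>L M (\<theta> 0)"
    using LIMSEQ_unique by fastforce
  moreover have "(real j - real i) * ?f j = - (real_of_int (int i - int j) * ?f j)" for i j
    by (simp add: algebra_simps)
  ultimately show ?thesis
    by (simp only: sum_negf mult_minus_right)
qed

end

theorem theorem2p3:
  fixes M :: "'a measure" and X \<theta> :: "nat \<Rightarrow> 'a \<Rightarrow> real" and c :: real and m :: nat
  assumes "prob_space M"
    and "c > 0"
    and rvX: "\<And>i. X i \<in> borel_measurable M"
    and rv\<theta>: "\<And>i. \<theta> i \<in> borel_measurable M"
    and indep: "prob_space.indep_vars M (\<lambda>_. borel)
                  (\<lambda>k. case k of Inl i \<Rightarrow> X i | Inr i \<Rightarrow> \<theta> i) (UNIV :: (nat + nat) set)"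
    and idX: "\<And>i. distr M borel (X i) = distr M borel (X 0)"
    and id\<theta>: "\<And>i. distr M borel (\<theta> i) = distr M borel (\<theta> 0)"
    and natX: "\<And>i \<omega>. \<omega> \<in> space M \<Longrightarrow> X i \<omega> \<in> \<nat>"
    and nat\<theta>: "\<And>i \<omega>. \<omega> \<in> space M \<Longrightarrow> c * \<theta> i \<omega> \<in> \<nat>"
    and bound: "measure M {\<omega> \<in> space M. c * \<theta> 0 \<omega> \<le> real m} = 1"
    and intX: "integrable M (X 0)"
    and int\<theta>: "integrable M (\<theta> 0)"
    and npc: "c * integral\<^sup>L M (\<theta> 0) - integral\<^sup>L M (X 0) > 0"
  shows
    "(\<forall>s::complex. s \<noteq> 0 \<and> norm s \<le> 1 \<longrightarrow>
        (\<Sum>i<m. complex_of_real (pi_M M X \<theta> c i) *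
            (\<Sum>j\<in>{i+1..m}. (1 - s powi (int i - int j)) * complex_of_real (f_pmf M (X 0) (\<theta> 0) c (- int j))))
        = pgf_M M X \<theta> c s * (1 - pgf_diff M (X 0) (\<lambda>\<omega>. c * \<theta> 0 \<omega>) s))
     \<and> (\<Sum>i<m. pi_M M X \<theta> c i *
            (\<Sum>j\<in>{i+1..m}. (real j - real i) * f_pmf M (X 0) (\<theta> 0) c (- int j)))
        = c * integral\<^sup>L M (\<theta> 0) - integral\<^sup>L M (X 0)
     \<and> (\<forall>s::complex. norm s < 1 \<and> s ^ m * (1 - pgf_diff M (X 0) (\<lambda>\<omega>. c * \<theta> 0 \<omega>) s) \<noteq> 0 \<longrightarrow>
        Xi M X \<theta> c s =
          1 / (s ^ m * (pgf_diff M (X 0) (\<lambda>\<omega>. c * \<theta> 0 \<omega>) s - 1)) *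
          (\<Sum>i<m. complex_of_real (pi_M M X \<theta> c i) *
            (\<Sum>j\<in>{0..m-i-1}. s ^ (j + i) * complex_of_real (F_cdf M (X 0) (\<theta> 0) c (- int m + int j)))))"
proof -
  interpret risk_model M X \<theta> c m
    by (rule risk_model.intro[OF assms(1)], unfold_locales) (use assms in \<open>simp_all\<close>)
  show ?thesis
    using pgf_identity mean_identity Xi_formula by blast
qed

end
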